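(* Let $f\in F$ and suppose that left-multiplying $f$ by $x_1$ cancels a caret from the bottom forest, i.e. in the reduced forest diagram of $f$ the top trees $T_0$ and $T_1$ are both trivial and their two leaves are exactly the two leaf children of a single bottom caret. Then $\ell(x_1f)=\ell(f)-1$.
   Context: Thompson's group $F$ is realized as the group of all orientation-preserving piecewise-linear homeomorphisms $f$ of $\mathbb R$ with finitely many breakpoints, all breakpoints having dyadic rational coordinates, all slopes integral powers of $2$, and with $f(t)=t-m$ for all sufficiently negative $t$ and $f(t)=t-n$ for all sufficiently positive $t$, for some integers $m,n$. Products are compositions of functions: $fg=f\circ g$. The generators are $x_0(t)=t-1$ and $x_1(t)=t$ for $t\le 0$, $x_1(t)=t/2$ for $0\le t\le 2$, $x_1(t)=t-1$ for $t\ge 2$. A forest diagram for $x_1f$ is obtained from one for $f$ by attaching a new caret to the roots of the top trees $T_0,T_1$ and pointing the top pointer at the combined tree. Forest diagrams: a binary forest is a sequence $(T_i)_{i\in\mathbb Z}$ of finite rooted binary trees (every node has $0$ or $2$ children; internal nodes are called carets; a trivial tree is a single leaf), all but finitely many trivial, together with a pointer marking $T_0$. Tree $T_i$ represents the interval $[i,i+1]$, each caret represents halving the interval of its node, and the leaves of the forest give a dyadic subdivision of $\mathbb R$. A forest diagram for $f$ is a pair of binary forests, the bottom (domain) forest with subdivision $\mathcal D$ and the top (range) forest with subdivision $\mathcal R$, such that $f$ maps each interval of $\mathcal D$ linearly onto an interval of $\mathcal R$; this matches the leaves of the two forests by an order-preserving bijection, so the two forests share one linearly ordered set of leaves (columns).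 A reduction deletes an opposing pair of carets, i.e. a top caret and a bottom caret both of whose children are leaves and which have the same two (matched) leaves. A forest diagram is reduced if no reduction is possible; every element of $F$ has a unique reduced forest diagram. The support of a forest diagram is the smallest set of consecutive columns containing all leaves of nontrivial trees of either forest and the leaves of the two trees marked by the two pointers. A space is a gap between two consecutive columns; the spaces in the support are the gaps between consecutive columns of the support. Labels: in each of the two forests separately (using that forest's own pointer), a space is interior if the leaves on both sides of it belong to the same tree and exterior otherwise; it lies immediately to the left of a caret $c$ of that forest if the leaf immediately to its right is the leftmost leaf descending from $c$. Each space of the support receives a label in each forest: $L$ if it is exterior and to the left of the tree marked by the pointer; otherwise $N$ if it lies immediately to the left of some caret; otherwise $R$ if it is exterior (hence to the right of the marked tree); otherwise $I$ (interior). A space thus has a label pair (top label, bottom label). Weights, by (top, bottom): $(L,L)=2$, $(L,N)=1$, $(L,R)=1$, $(L,I)=1$; $(N,L)=1$, $(N,N)=2$, $(N,R)=2$, $(N,I)=2$; $(R,L)=1$, $(R,N)=2$, $(R,R)=2$, $(R,I)=0$; $(I,L)=1$, $(I,N)=2$, $(I,R)=0$, $(I,I)=0$. For $f\in F$, $\ell(f)=\ell_0(f)+\ell_1(f)$, where $\ell_0(f)$ is the sum of the weights of the spaces in the support of the reduced forest diagram of $f$ and $\ell_1(f)$ is its total number of carets; $\ell(f)$ equals the word length of $f$ with respect to $\{x_0,x_1\}$. *)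

theory Defs
  imports Complex_Main
begin

definition dyadic :: "real \<Rightarrow> bool" where
  "dyadic x \<longleftrightarrow> (\<exists>k::int. \<exists>n::nat. x = real_of_int k / 2 ^ n)"

definition in_F :: "(real \<Rightarrow> real) \<Rightarrow> bool" where
  "in_F f \<longleftrightarrow> (\<exists>ps::real list. \<exists>m n::int.
      ps \<noteq> [] \<and> sorted_wrt (<) ps \<and>
      (\<forall>p\<in>set ps. dyadic p \<and> dyadic (f p)) \<and>
      (\<forall>t. t \<le> hd ps \<longrightarrow> f t = t - real_of_int m) \<and>
      (\<forall>t. last ps \<le> t \<longrightarrow> f t = t - real_of_int n) \<and>
      (\<forall>i. Suc i < length ps \<longrightarrow> (\<exists>k::int. \<forall>t\<in>{ps!i..ps!Suc i}.
            f t = f (ps!i) + (2::real) powi k * (t - ps!i))))"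

definition x0 :: "real \<Rightarrow> real" where
  "x0 t = t - 1"

definition x1 :: "real \<Rightarrow> real" where
  "x1 t = (if t \<le> 0 then t else if t \<le> 2 then t / 2 else t - 1)"

datatype tree = Leaf | Node tree tree

fun leaf_ivs :: "tree \<Rightarrow> real \<Rightarrow> real \<Rightarrow> (real \<times> real) set" where
  "leaf_ivs Leaf a b = {(a, b)}"
| "leaf_ivs (Node l r) a b = leaf_ivs l a ((a + b) / 2) \<union> leaf_ivs r ((a + b) / 2) b"

fun caret_ivs :: "tree \<Rightarrow> real \<Rightarrow> real \<Rightarrow> (real \<times> real) set" where
  "caret_ivs Leaf a b = {}"
| "caret_ivs (Node l r) a b =
     insert (a, b) (caret_ivs l a ((a + b) / 2) \<union> caret_ivs r ((a + b) / 2) b)"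

fun elem_caret_ivs :: "tree \<Rightarrow> real \<Rightarrow> real \<Rightarrow> (real \<times> real) set" where
  "elem_caret_ivs Leaf a b = {}"
| "elem_caret_ivs (Node l r) a b =
     (if l = Leaf \<and> r = Leaf then {(a, b)}
      else elem_caret_ivs l a ((a + b) / 2) \<union> elem_caret_ivs r ((a + b) / 2) b)"

fun ncarets :: "tree \<Rightarrow> nat" where
  "ncarets Leaf = 0"
| "ncarets (Node l r) = Suc (ncarets l + ncarets r)"

text \<open>A forest is indexed by the integers; tree i represents [i,i+1]; the pointer marks tree 0.\<close>
type_synonym forest = "int \<Rightarrow> tree"

definition binary_forest :: "forest \<Rightarrow> bool" where
  "binary_forest F \<longleftrightarrow> finite {i. F i \<noteq> Leaf}"

definition forest_leaves :: "forest \<Rightarrow> (real \<times> real) set" where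
  "forest_leaves F = (\<Union>i. leaf_ivs (F i) (real_of_int i) (real_of_int i + 1))"

definition forest_carets :: "forest \<Rightarrow> (real \<times> real) set" where
  "forest_carets F = (\<Union>i. caret_ivs (F i) (real_of_int i) (real_of_int i + 1))"

definition forest_elem_carets :: "forest \<Rightarrow> (real \<times> real) set" where
  "forest_elem_carets F = (\<Union>i. elem_caret_ivs (F i) (real_of_int i) (real_of_int i + 1))"

text \<open>Spaces of a forest = subdivision points (gaps between consecutive leaves).\<close>
definition forest_points :: "forest \<Rightarrow> real set" where
  "forest_points F = {a. \<exists>b. (a, b) \<in> forest_leaves F}"

text \<open>B = bottom (domain) forest, T = top (range) forest.\<close>
definition forest_diagram :: "(real \<Rightarrow> real) \<Rightarrow> forest \<Rightarrow> forest \<Rightarrow> bool" where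
  "forest_diagram f B T \<longleftrightarrow> binary_forest B \<and> binary_forest T \<and>
     (\<forall>(a, b)\<in>forest_leaves B. (f a, f b) \<in> forest_leaves T \<and>
        (\<forall>t\<in>{a..b}. f t = f a + (f b - f a) / (b - a) * (t - a)))"

definition reduced_forest_diagram :: "(real \<Rightarrow> real) \<Rightarrow> forest \<Rightarrow> forest \<Rightarrow> bool" where
  "reduced_forest_diagram f B T \<longleftrightarrow> forest_diagram f B T \<and>
     \<not> (\<exists>(a, b)\<in>forest_elem_carets B. (f a, f b) \<in> forest_elem_carets T)"

datatype label = LL | NN | RR | II

definition space_label :: "forest \<Rightarrow> real \<Rightarrow> label" where
  "space_label F q =
     (if q \<in> \<int> \<and> q \<le> 0 then LL
      else if (\<exists>b. (q, b) \<in> forest_carets F) then NN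
      else if q \<in> \<int> then RR
      else II)"

fun weight :: "label \<Rightarrow> label \<Rightarrow> nat" where
  "weight LL LL = 2" | "weight LL NN = 1" | "weight LL RR = 1" | "weight LL II = 1"
| "weight NN LL = 1" | "weight NN NN = 2" | "weight NN RR = 2" | "weight NN II = 2"
| "weight RR LL = 1" | "weight RR NN = 2" | "weight RR RR = 2" | "weight RR II = 0"
| "weight II LL = 1" | "weight II NN = 2" | "weight II RR = 0" | "weight II II = 0"

text \<open>A column is a bottom leaf (a,b), matched with top leaf (f a, f b). It is required in the
  support if it is a leaf of a nontrivial tree of either forest or of a marked tree.\<close>
definition support_column :: "(real \<Rightarrow> real) \<Rightarrow> forest \<Rightarrow> forest \<Rightarrow> real \<Rightarrow> real \<Rightarrow> bool" where
  "support_column f B T a b \<longleftrightarrow>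
     (0 \<le> a \<and> b \<le> 1) \<or> B \<lfloor>a\<rfloor> \<noteq> Leaf \<or> (0 \<le> f a \<and> f b \<le> 1) \<or> T \<lfloor>f a\<rfloor> \<noteq> Leaf"

text \<open>Spaces of the support, as points of the bottom subdivision (the corresponding top point is f p).\<close>
definition support_spaces :: "(real \<Rightarrow> real) \<Rightarrow> forest \<Rightarrow> forest \<Rightarrow> real set" where
  "support_spaces f B T = {p \<in> forest_points B.
      (\<exists>(a, b)\<in>forest_leaves B. support_column f B T a b \<and> b \<le> p) \<and>
      (\<exists>(a, b)\<in>forest_leaves B. support_column f B T a b \<and> p \<le> a)}"

definition ell0_diag :: "(real \<Rightarrow> real) \<Rightarrow> forest \<Rightarrow> forest \<Rightarrow> nat" where
  "ell0_diag f B T = (\<Sum>p\<in>support_spaces f B T. weight (space_label T (f p)) (space_label B p))"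

definition ell1_diag :: "forest \<Rightarrow> forest \<Rightarrow> nat" where
  "ell1_diag B T = (\<Sum>i\<in>{i. B i \<noteq> Leaf}. ncarets (B i)) + (\<Sum>i\<in>{i. T i \<noteq> Leaf}. ncarets (T i))"

definition ell :: "(real \<Rightarrow> real) \<Rightarrow> nat" where
  "ell f = (THE n. \<exists>B T. reduced_forest_diagram f B T \<and> n = ell0_diag f B T + ell1_diag B T)"

end

theory Submission
  imports Defs
begin

(*
  Since T_0 and T_1 are trivial, their leaves [0,1] and [1,2] are the images of the two leaves of an
  elementary bottom caret (a, b). Deleting this caret from the bottom forest, and replacing T_0, T_1 by
  one trivial tree while shifting the trees T_i, i >= 2, one step to the left, gives a forest diagram
  of x1 f, which is again reduced. It has one caret fewer; its support is that of f without the space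
  at the midpoint of (a, b), whose label pair is (R, I) of weight 0, and all other spaces keep their
  weights. As the reduced forest diagram of an element of F is unique (the common coarsening of two
  diagrams is again a diagram, and a reduced diagram has no proper coarsening), l(x1 f) = l(f) - 1.
*)

fun node_ivs :: "tree \<Rightarrow> real \<Rightarrow> real \<Rightarrow> (real \<times> real) set" where
  "node_ivs Leaf a b = {(a, b)}"
| "node_ivs (Node l r) a b = insert (a, b) (node_ivs l a ((a + b) / 2) \<union> node_ivs r ((a + b) / 2) b)"

lemma node_ivs_eq: "node_ivs t a b = caret_ivs t a b \<union> leaf_ivs t a b"
  by (induction t arbitrary: a b) auto

lemma root_in_node_ivs: "(a, b) \<in> node_ivs t a b"
  by (cases t) auto

lemma node_ivs_bounds: "(u, v) \<in> node_ivs t a b \<Longrightarrow> a < b \<Longrightarrow> a \<le> u \<and> u < v \<and> v \<le> b"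
proof (induction t arbitrary: a b)
  case (Node l r)
  have "a < (a + b) / 2" "(a + b) / 2 < b" using Node.prems by auto
  then show ?case
    using Node.prems(1) Node.IH(1)[of a "(a + b) / 2"] Node.IH(2)[of "(a + b) / 2" b] by fastforce
qed auto

lemma leaf_ivs_bounds: "(u, v) \<in> leaf_ivs t a b \<Longrightarrow> a < b \<Longrightarrow> a \<le> u \<and> u < v \<and> v \<le> b"
  and caret_ivs_bounds: "(u, v) \<in> caret_ivs t a b \<Longrightarrow> a < b \<Longrightarrow> a \<le> u \<and> u < v \<and> v \<le> b"
  using node_ivs_bounds node_ivs_eq by blast+

lemma elem_caret_ivs_subset: "elem_caret_ivs t a b \<subseteq> caret_ivs t a b"
proof (induction t arbitrary: a b)
  case (Node l r)
  then show ?case by (cases "l = Leaf \<and> r = Leaf") (auto, (meson subsetD)+)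
qed simp

lemma elem_caret_ivs_bounds: "(u, v) \<in> elem_caret_ivs t a b \<Longrightarrow> a < b \<Longrightarrow> a \<le> u \<and> u < v \<and> v \<le> b"
  using caret_ivs_bounds elem_caret_ivs_subset by blast

lemma caret_ivs_children:
  "(u, v) \<in> caret_ivs t a b \<Longrightarrow> (u, (u + v) / 2) \<in> node_ivs t a b \<and> ((u + v) / 2, v) \<in> node_ivs t a b"
  by (induction t arbitrary: a b) (auto simp: root_in_node_ivs)

lemma node_ivs_laminar:
  "(u, v) \<in> node_ivs t a b \<Longrightarrow> (u', v') \<in> node_ivs t a b \<Longrightarrow> a < b \<Longrightarrow>
   (u \<le> u' \<and> v' \<le> v) \<or> (u' \<le> u \<and> v \<le> v') \<or> v \<le> u' \<or> v' \<le> u"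
proof (induction t arbitrary: a b)
  case (Node l r)
  let ?m = "(a + b) / 2"
  have "a < ?m" "?m < b" using Node.prems by auto
  then show ?case
    using Node.prems(1,2) Node.IH(1)[of a ?m] Node.IH(2)[of ?m b]
      node_ivs_bounds[of u v l a ?m] node_ivs_bounds[of u v r ?m b]
      node_ivs_bounds[of u' v' l a ?m] node_ivs_bounds[of u' v' r ?m b]
    by auto
qed simp

lemma leaf_ivs_minimal:
  "(u, v) \<in> leaf_ivs t a b \<Longrightarrow> (u', v') \<in> node_ivs t a b \<Longrightarrow> u \<le> u' \<Longrightarrow> v' \<le> v \<Longrightarrow> a < b \<Longrightarrow>
   u' = u \<and> v' = v"
proof (induction t arbitrary: a b)
  case Leaf then show ?case by auto
next
  case (Node l r)
  define m where "m = (a + b) / 2"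
  have m: "a < m" "m < b" using Node.prems by (auto simp: m_def)
  have uv: "(u, v) \<in> leaf_ivs l a m \<or> (u, v) \<in> leaf_ivs r m b" using Node.prems(1) by (auto simp: m_def)
  have bl: "(u, v) \<in> leaf_ivs l a m \<Longrightarrow> a \<le> u \<and> u < v \<and> v \<le> m" using leaf_ivs_bounds m by blast
  have br: "(u, v) \<in> leaf_ivs r m b \<Longrightarrow> m \<le> u \<and> u < v \<and> v \<le> b" using leaf_ivs_bounds m by blast
  have uv': "(u', v') = (a, b) \<or> (u', v') \<in> node_ivs l a m \<or> (u', v') \<in> node_ivs r m b"
    using Node.prems(2) by (auto simp: m_def)
  have bl': "(u', v') \<in> node_ivs l a m \<Longrightarrow> a \<le> u' \<and> u' < v' \<and> v' \<le> m" using node_ivs_bounds m by blast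
  have br': "(u', v') \<in> node_ivs r m b \<Longrightarrow> m \<le> u' \<and> u' < v' \<and> v' \<le> b" using node_ivs_bounds m by blast
  show ?case using uv uv' bl br bl' br' Node.IH(1)[of a m] Node.IH(2)[of m b] m Node.prems(3,4) by auto
qed

lemma caret_ivs_not_leaf:
  assumes "(u, v) \<in> caret_ivs t a b" "a < b"
  shows "(u, v) \<notin> leaf_ivs t a b"
proof
  assume "(u, v) \<in> leaf_ivs t a b"
  moreover have "(u, (u + v) / 2) \<in> node_ivs t a b" using caret_ivs_children[OF assms(1)] by blast
  moreover have "u < v" using caret_ivs_bounds[OF assms] by blast
  ultimately show False using leaf_ivs_minimal[of u v t a b u "(u + v) / 2"] assms(2) by auto
qed

lemma leaf_ivs_root: "(a, b) \<in> leaf_ivs t a b \<Longrightarrow> a < b \<Longrightarrow> t = Leaf"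
  using caret_ivs_not_leaf[of a b t a b] by (cases t) auto

lemma elem_caret_ivs_iff:
  assumes "a < b"
  shows "(u, v) \<in> elem_caret_ivs t a b \<longleftrightarrow>
    (u, v) \<in> caret_ivs t a b \<and> (u, (u + v) / 2) \<in> leaf_ivs t a b \<and> ((u + v) / 2, v) \<in> leaf_ivs t a b"
    (is "_ \<longleftrightarrow> ?elem t a b")
  using assms
proof (induction t arbitrary: a b)
  case (Node l r)
  let ?m = "(a + b) / 2" and ?w = "(u + v) / 2"
  have m: "a < ?m" "?m < b" using Node.prems by auto
  show ?case
  proof (cases "l = Leaf \<and> r = Leaf")
    case False
    then have elem: "elem_caret_ivs (Node l r) a b = elem_caret_ivs l a ?m \<union> elem_caret_ivs r ?m b"
      by auto
    have "(u, v) \<in> elem_caret_ivs (Node l r) a b" if h: "?elem (Node l r) a b"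
    proof -
      have uv: "a \<le> u" "u < v" "v \<le> b" using caret_ivs_bounds[of u v "Node l r" a b] h Node.prems by auto
      note lb = leaf_ivs_bounds[OF _ m(1), of _ _ l] leaf_ivs_bounds[OF _ m(2), of _ _ r]
      consider "(u, v) = (a, b)" | "(u, v) \<in> caret_ivs l a ?m" | "(u, v) \<in> caret_ivs r ?m b"
        using h by auto
      then show ?thesis
      proof cases
        case 1
        then have "(a, ?m) \<in> leaf_ivs l a ?m" "(?m, b) \<in> leaf_ivs r ?m b"
          using h lb[of a ?m] lb[of ?m b] m by auto
        then show ?thesis using False leaf_ivs_root m by blast
      next
        case 2
        then have "v \<le> ?m" using caret_ivs_bounds[OF _ m(1)] by blast
        then have "?elem l a ?m" using 2 h uv lb[of u ?w] lb[of ?w v] by auto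
        then show ?thesis using elem Node.IH(1)[OF m(1)] by blast
      next
        case 3
        then have "?m \<le> u" using caret_ivs_bounds[OF _ m(2)] by blast
        then have "?elem r ?m b" using 3 h uv lb[of u ?w] lb[of ?w v] by auto
        then show ?thesis using elem Node.IH(2)[OF m(2)] by blast
      qed
    qed
    moreover have "?elem (Node l r) a b" if "(u, v) \<in> elem_caret_ivs (Node l r) a b"
      using that elem Node.IH(1)[OF m(1)] Node.IH(2)[OF m(2)] by (auto simp del: elem_caret_ivs.simps)
    ultimately show ?thesis by blast
  next
    case True
    then show ?thesis by auto
  qed
qed simp

lemma elem_caret_ivs_nonempty: "t \<noteq> Leaf \<Longrightarrow> elem_caret_ivs t a b \<noteq> {}"
proof (induction t arbitrary: a b)
  case (Node l r)
  then show ?case by (cases "l = Leaf \<and> r = Leaf") auto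
qed simp

lemma caret_ivs_contains_elem:
  "(u, v) \<in> caret_ivs t a b \<Longrightarrow> a < b \<Longrightarrow> \<exists>u' v'. (u', v') \<in> elem_caret_ivs t a b \<and> u \<le> u' \<and> v' \<le> v"
proof (induction t arbitrary: a b)
  case (Node l r)
  define m where "m = (a + b) / 2"
  have m: "a < m" "m < b" using Node.prems by (auto simp: m_def)
  show ?case
  proof (cases "(u, v) = (a, b)")
    case True
    then show ?thesis
      using elem_caret_ivs_nonempty[of "Node l r" a b] elem_caret_ivs_bounds[OF _ Node.prems(2)] by fastforce
  next
    case False
    then have "(u, v) \<in> caret_ivs l a m \<or> (u, v) \<in> caret_ivs r m b"
      using Node.prems(1) by (auto simp: m_def)
    moreover have "\<not> (l = Leaf \<and> r = Leaf)" using calculation by auto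
    ultimately show ?thesis using Node.IH(1)[OF _ m(1)] Node.IH(2)[OF _ m(2)] by (auto simp: m_def)
  qed
qed simp

lemma leaf_ivs_cover: "a \<le> x \<Longrightarrow> x \<le> b \<Longrightarrow> \<exists>u v. (u, v) \<in> leaf_ivs t a b \<and> u \<le> x \<and> x \<le> v"
proof (induction t arbitrary: a b)
  case (Node l r)
  show ?case
  proof (cases "x \<le> (a + b) / 2")
    case True
    then show ?thesis using Node.IH(1)[of a "(a + b) / 2"] Node.prems by auto
  next
    case False
    then show ?thesis using Node.IH(2)[of "(a + b) / 2" b] Node.prems by auto
  qed
qed auto

fun meet :: "tree \<Rightarrow> tree \<Rightarrow> tree" where
  "meet (Node l r) (Node l' r') = Node (meet l l') (meet r r')"
| "meet _ _ = Leaf"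

lemma meet_comm: "meet t t' = meet t' t"
  by (induction t t' rule: meet.induct) auto

lemma leaf_ivs_meet: "leaf_ivs (meet t t') a b \<subseteq> leaf_ivs t a b \<union> leaf_ivs t' a b"
proof (induction t t' arbitrary: a b rule: meet.induct)
  case (1 l r l' r')
  show ?case using "1.IH"(1)[of a "(a + b) / 2"] "1.IH"(2)[of "(a + b) / 2" b] by auto
qed auto

lemma node_ivs_meet: "node_ivs (meet t t') a b \<subseteq> node_ivs t a b \<inter> node_ivs t' a b"
proof (induction t t' arbitrary: a b rule: meet.induct)
  case (1 l r l' r')
  show ?case using "1.IH"(1)[of a "(a + b) / 2"] "1.IH"(2)[of "(a + b) / 2" b] by auto
qed (auto simp: root_in_node_ivs)

lemma leaf_ivs_meetI:
  "(u, v) \<in> leaf_ivs t1 a b \<Longrightarrow> (u, v) \<in> node_ivs t2 a b \<Longrightarrow> a < b \<Longrightarrow> (u, v) \<in> leaf_ivs (meet t1 t2) a b"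
proof (induction t1 arbitrary: t2 a b)
  case Leaf then show ?case by (cases t2) auto
next
  case (Node l r)
  define m where "m = (a + b) / 2"
  have m: "a < m" "m < b" using Node.prems by (auto simp: m_def)
  have lb: "\<And>u v. (u, v) \<in> leaf_ivs l a m \<Longrightarrow> a \<le> u \<and> u < v \<and> v \<le> m"
    and rb: "\<And>u v. (u, v) \<in> leaf_ivs r m b \<Longrightarrow> m \<le> u \<and> u < v \<and> v \<le> b"
    using leaf_ivs_bounds m by blast+
  have leaf: "(u, v) \<in> leaf_ivs l a m \<or> (u, v) \<in> leaf_ivs r m b" using Node.prems by (auto simp: m_def)
  show ?case
  proof (cases t2)
    case Leaf
    then have "(u, v) = (a, b)" using Node.prems by auto
    then show ?thesis using leaf lb[of a b] rb[of a b] m by auto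
  next
    case (Node l' r')
    have lb': "\<And>u v. (u, v) \<in> node_ivs l' a m \<Longrightarrow> a \<le> u \<and> u < v \<and> v \<le> m"
      and rb': "\<And>u v. (u, v) \<in> node_ivs r' m b \<Longrightarrow> m \<le> u \<and> u < v \<and> v \<le> b"
      using node_ivs_bounds m by blast+
    have "(u, v) = (a, b) \<or> (u, v) \<in> node_ivs l' a m \<or> (u, v) \<in> node_ivs r' m b"
      using Node.prems Node by (auto simp: m_def)
    then show ?thesis
      using leaf lb[of u v] rb[of u v] lb'[of u v] rb'[of u v] m Node
        Node.IH(1)[OF _ _ m(1), of l'] Node.IH(2)[OF _ _ m(2), of r'] by (auto simp: m_def)
  qed
qed

lemma meet_eq_left:
  "leaf_ivs (meet t1 t2) a b \<subseteq> leaf_ivs t1 a b \<Longrightarrow> a < b \<Longrightarrow> meet t1 t2 = t1"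
proof (induction t1 arbitrary: t2 a b)
  case Leaf then show ?case by (cases t2) auto
next
  case (Node l r)
  define m where "m = (a + b) / 2"
  have m: "a < m" "m < b" using Node.prems by (auto simp: m_def)
  have lb: "\<And>u v. (u, v) \<in> leaf_ivs l a m \<Longrightarrow> a \<le> u \<and> u < v \<and> v \<le> m" using leaf_ivs_bounds m by blast
  have rb: "\<And>u v. (u, v) \<in> leaf_ivs r m b \<Longrightarrow> m \<le> u \<and> u < v \<and> v \<le> b" using leaf_ivs_bounds m by blast
  show ?case
  proof (cases t2)
    case Leaf
    then have "(a, b) \<in> leaf_ivs (Node l r) a b" using Node.prems by auto
    then show ?thesis using lb[of a b] rb[of a b] m by (auto simp: m_def)
  next
    case (Node l' r')
    have lb2: "\<And>u v. (u, v) \<in> leaf_ivs (meet l l') a m \<Longrightarrow> a \<le> u \<and> u < v \<and> v \<le> m" using leaf_ivs_bounds m by blast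
    have rb2: "\<And>u v. (u, v) \<in> leaf_ivs (meet r r') m b \<Longrightarrow> m \<le> u \<and> u < v \<and> v \<le> b" using leaf_ivs_bounds m by blast
    have s: "leaf_ivs (meet l l') a m \<union> leaf_ivs (meet r r') m b \<subseteq> leaf_ivs l a m \<union> leaf_ivs r m b"
      using Node.prems(1) \<open>t2 = Node l' r'\<close> by (simp add: m_def)
    have "leaf_ivs (meet l l') a m \<subseteq> leaf_ivs l a m"
    proof
      fix K assume "K \<in> leaf_ivs (meet l l') a m"
      moreover obtain u v where "K = (u, v)" by (cases K)
      ultimately show "K \<in> leaf_ivs l a m" using s lb2[of u v] rb[of u v] by auto
    qed
    moreover have "leaf_ivs (meet r r') m b \<subseteq> leaf_ivs r m b"
    proof
      fix K assume "K \<in> leaf_ivs (meet r r') m b"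
      moreover obtain u v where "K = (u, v)" by (cases K)
      ultimately show "K \<in> leaf_ivs r m b" using s rb2[of u v] lb[of u v] by auto
    qed
    ultimately show ?thesis using Node.IH(1)[OF _ m(1)] Node.IH(2)[OF _ m(2)] \<open>t2 = Node l' r'\<close> by auto
  qed
qed

lemma node_ivs_if_not_crossing:
  assumes "(u, v) \<in> node_ivs t a b" "a < b"
    and "\<And>c d. (c, d) \<in> leaf_ivs t' a b \<Longrightarrow> (u \<le> c \<and> d \<le> v) \<or> d \<le> u \<or> v \<le> c"
  shows "(u, v) \<in> node_ivs t' a b"
  using assms
proof (induction t' arbitrary: t a b)
  case Leaf
  then show ?case using node_ivs_bounds[of u v t a b] by fastforce
next
  case (Node l r)
  define m where "m = (a + b) / 2"
  have m: "a < m" "m < b" using Node.prems by (auto simp: m_def)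
  show ?case
  proof (cases "(u, v) = (a, b)")
    case False
    then obtain l1 r1 where "t = Node l1 r1" using Node.prems(1) by (cases t) auto
    then have "(u, v) \<in> node_ivs l1 a m \<or> (u, v) \<in> node_ivs r1 m b"
      using False Node.prems(1) by (auto simp: m_def)
    moreover have "\<And>c d. (c, d) \<in> leaf_ivs l a m \<Longrightarrow> (u \<le> c \<and> d \<le> v) \<or> d \<le> u \<or> v \<le> c"
      and "\<And>c d. (c, d) \<in> leaf_ivs r m b \<Longrightarrow> (u \<le> c \<and> d \<le> v) \<or> d \<le> u \<or> v \<le> c"
      using Node.prems(3) by (auto simp: m_def)
    ultimately have "(u, v) \<in> node_ivs l a m \<or> (u, v) \<in> node_ivs r m b"
      using Node.IH(1)[OF _ m(1)] Node.IH(2)[OF _ m(2)] by blast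
    then show ?thesis by (auto simp: m_def)
  qed simp
qed

inductive dyadic_desc :: "real \<times> real \<Rightarrow> real \<times> real \<Rightarrow> bool" for K where
  refl: "dyadic_desc K K"
| left: "dyadic_desc K (x, y) \<Longrightarrow> dyadic_desc K (x, (x + y) / 2)"
| right: "dyadic_desc K (x, y) \<Longrightarrow> dyadic_desc K ((x + y) / 2, y)"

lemma dyadic_desc_trans: "dyadic_desc P E \<Longrightarrow> dyadic_desc K P \<Longrightarrow> dyadic_desc K E"
  by (induction rule: dyadic_desc.induct) (auto intro: dyadic_desc.intros)

lemma dyadic_desc_bounds:
  "dyadic_desc (u, v) E \<Longrightarrow> u < v \<Longrightarrow> u \<le> fst E \<and> snd E \<le> v \<and> fst E < snd E"
  by (induction rule: dyadic_desc.induct) auto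

lemma node_ivs_dyadic_desc_root: "N \<in> node_ivs t a b \<Longrightarrow> dyadic_desc (a, b) N"
proof (induction t arbitrary: a b)
  case (Node l r)
  have "N = (a, b) \<or> N \<in> node_ivs l a ((a + b) / 2) \<or> N \<in> node_ivs r ((a + b) / 2) b"
    using Node.prems by auto
  moreover have "dyadic_desc (a, b) (a, (a + b) / 2)" "dyadic_desc (a, b) ((a + b) / 2, b)"
    by (auto intro: dyadic_desc.intros)
  ultimately show ?case
    using Node.IH(1)[of a "(a + b) / 2"] Node.IH(2)[of "(a + b) / 2" b] dyadic_desc_trans dyadic_desc.refl
    by blast
qed (auto intro: dyadic_desc.refl)

lemma node_ivs_dyadic_desc:
  "(u, v) \<in> node_ivs t a b \<Longrightarrow> (x, y) \<in> node_ivs t a b \<Longrightarrow> u \<le> x \<Longrightarrow> y \<le> v \<Longrightarrow> a < b \<Longrightarrow>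
   dyadic_desc (u, v) (x, y)"
proof (induction t arbitrary: a b)
  case (Node l r)
  define m where "m = (a + b) / 2"
  have m: "a < m" "m < b" using Node.prems by (auto simp: m_def)
  have lb: "\<And>u v. (u, v) \<in> node_ivs l a m \<Longrightarrow> a \<le> u \<and> u < v \<and> v \<le> m"
    and rb: "\<And>u v. (u, v) \<in> node_ivs r m b \<Longrightarrow> m \<le> u \<and> u < v \<and> v \<le> b"
    using node_ivs_bounds m by blast+
  show ?case
  proof (cases "(u, v) = (a, b)")
    case True
    then show ?thesis using node_ivs_dyadic_desc_root Node.prems(2) by blast
  next
    case False
    then have "(u, v) \<in> node_ivs l a m \<or> (u, v) \<in> node_ivs r m b"
      using Node.prems(1) by (auto simp: m_def)
    moreover have "(x, y) = (a, b) \<or> (x, y) \<in> node_ivs l a m \<or> (x, y) \<in> node_ivs r m b"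
      using Node.prems(2) by (auto simp: m_def)
    ultimately show ?thesis
      using lb[of u v] rb[of u v] lb[of x y] rb[of x y] Node.prems(3,4) m
        Node.IH(1)[OF _ _ _ _ m(1)] Node.IH(2)[OF _ _ _ _ m(2)] by fastforce
  qed
qed (auto intro: dyadic_desc.refl)

lemma dyadic_desc_affine_image:
  assumes "dyadic_desc (u, v) E" "u < v"
    and affine: "\<And>t. u \<le> t \<Longrightarrow> t \<le> v \<Longrightarrow> f t = f u + c * (t - u)"
  shows "dyadic_desc (f u, f v) (f (fst E), f (snd E))"
proof -
  have mid: "f ((x + y) / 2) = (f x + f y) / 2" if "dyadic_desc (u, v) (x, y)" for x y
  proof -
    have "u \<le> x" "y \<le> v" "x < y" using dyadic_desc_bounds[OF that assms(2)] by auto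
    then show ?thesis using affine[of x] affine[of y] affine[of "(x + y) / 2"] by (simp add: field_simps)
  qed
  show ?thesis
    using assms(1)
  proof induction
    case (left x y)
    then have "dyadic_desc (f u, f v) (f x, f y)" by simp
    then show ?case unfolding fst_conv snd_conv mid[OF left.hyps] by (rule dyadic_desc.left)
  next
    case (right x y)
    then have "dyadic_desc (f u, f v) (f x, f y)" by simp
    then show ?case unfolding fst_conv snd_conv mid[OF right.hyps] by (rule dyadic_desc.right)
  qed (simp add: dyadic_desc.refl)
qed

definition forest_nodes :: "forest \<Rightarrow> (real \<times> real) set" where
  "forest_nodes F = (\<Union>i. node_ivs (F i) (real_of_int i) (real_of_int i + 1))"

lemma forest_nodes_eq: "forest_nodes F = forest_carets F \<union> forest_leaves F"
  unfolding forest_nodes_def forest_carets_def forest_leaves_def node_ivs_eq by auto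

lemma forest_leaves_subset_nodes: "forest_leaves F \<subseteq> forest_nodes F"
  and forest_carets_subset_nodes: "forest_carets F \<subseteq> forest_nodes F"
  by (simp_all add: forest_nodes_eq)

lemma node_ivs_unit_bounds:
  "(u, v) \<in> node_ivs t (real_of_int i) (real_of_int i + 1) \<Longrightarrow> \<lfloor>u\<rfloor> = i \<and> u < v \<and> v \<le> real_of_int i + 1"
  using node_ivs_bounds[of u v t "real_of_int i" "real_of_int i + 1"] by (auto intro: floor_unique)

lemma in_forest_ivs_iff:
  assumes "\<And>t i u v. (u, v) \<in> g t (real_of_int i) (real_of_int i + 1) \<Longrightarrow>
      (u, v) \<in> node_ivs t (real_of_int i) (real_of_int i + 1)"
  shows "(u, v) \<in> (\<Union>i. g (F i) (real_of_int i) (real_of_int i + 1)) \<longleftrightarrow>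
    (u, v) \<in> g (F \<lfloor>u\<rfloor>) (real_of_int \<lfloor>u\<rfloor>) (real_of_int \<lfloor>u\<rfloor> + 1)"
  using assms node_ivs_unit_bounds by blast

lemma forest_nodes_iff:
    "(u, v) \<in> forest_nodes F \<longleftrightarrow> (u, v) \<in> node_ivs (F \<lfloor>u\<rfloor>) (real_of_int \<lfloor>u\<rfloor>) (real_of_int \<lfloor>u\<rfloor> + 1)"
  and forest_leaves_iff:
    "(u, v) \<in> forest_leaves F \<longleftrightarrow> (u, v) \<in> leaf_ivs (F \<lfloor>u\<rfloor>) (real_of_int \<lfloor>u\<rfloor>) (real_of_int \<lfloor>u\<rfloor> + 1)"
  and forest_carets_iff:
    "(u, v) \<in> forest_carets F \<longleftrightarrow> (u, v) \<in> caret_ivs (F \<lfloor>u\<rfloor>) (real_of_int \<lfloor>u\<rfloor>) (real_of_int \<lfloor>u\<rfloor> + 1)"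
  and forest_elem_carets_iff_tree:
    "(u, v) \<in> forest_elem_carets F \<longleftrightarrow>
       (u, v) \<in> elem_caret_ivs (F \<lfloor>u\<rfloor>) (real_of_int \<lfloor>u\<rfloor>) (real_of_int \<lfloor>u\<rfloor> + 1)"
  unfolding forest_nodes_def forest_leaves_def forest_carets_def forest_elem_carets_def
  by (rule in_forest_ivs_iff; use node_ivs_eq elem_caret_ivs_subset in blast)+

lemma forest_nodes_bounds: "(u, v) \<in> forest_nodes F \<Longrightarrow> u < v \<and> v \<le> real_of_int \<lfloor>u\<rfloor> + 1"
  using forest_nodes_iff node_ivs_unit_bounds by blast

lemma forest_leaves_bounds: "(u, v) \<in> forest_leaves F \<Longrightarrow> u < v \<and> v \<le> real_of_int \<lfloor>u\<rfloor> + 1"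
  and forest_carets_bounds: "(u, v) \<in> forest_carets F \<Longrightarrow> u < v \<and> v \<le> real_of_int \<lfloor>u\<rfloor> + 1"
  using forest_nodes_bounds forest_nodes_eq by blast+

lemma floor_inside_forest_node:
  "(u, v) \<in> forest_nodes F \<Longrightarrow> u \<le> x \<Longrightarrow> x < v \<Longrightarrow> \<lfloor>x\<rfloor> = \<lfloor>u\<rfloor>"
  using forest_nodes_bounds[of u v F] by (intro floor_unique) linarith+

lemma forest_nodes_laminar:
  assumes "(u, v) \<in> forest_nodes F" "(u', v') \<in> forest_nodes F"
  shows "(u \<le> u' \<and> v' \<le> v) \<or> (u' \<le> u \<and> v \<le> v') \<or> v \<le> u' \<or> v' \<le> u"
proof (cases "\<lfloor>u\<rfloor> = \<lfloor>u'\<rfloor>")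
  case True
  then show ?thesis
    using assms node_ivs_laminar[of u v _ _ _ u' v'] unfolding forest_nodes_iff by simp
next
  case False
  then show ?thesis
    using floor_inside_forest_node[OF assms(1), of u'] floor_inside_forest_node[OF assms(2), of u] by fastforce
qed

lemma forest_leaf_minimal:
  assumes "(u, v) \<in> forest_leaves F" "(u', v') \<in> forest_nodes F" "u \<le> u'" "v' \<le> v"
  shows "u' = u \<and> v' = v"
proof -
  have "\<lfloor>u'\<rfloor> = \<lfloor>u\<rfloor>"
    using assms floor_inside_forest_node[of u v F u'] forest_nodes_eq forest_nodes_bounds[of u' v' F] by force
  then show ?thesis
    using assms leaf_ivs_minimal unfolding forest_leaves_iff forest_nodes_iff by force
qed

lemma forest_caret_not_leaf: "(u, v) \<in> forest_carets F \<Longrightarrow> (u, v) \<notin> forest_leaves F"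
  unfolding forest_carets_iff forest_leaves_iff using caret_ivs_not_leaf by force

lemma forest_caret_children:
  assumes "(u, v) \<in> forest_carets F"
  shows "(u, (u + v) / 2) \<in> forest_nodes F \<and> ((u + v) / 2, v) \<in> forest_nodes F"
proof -
  obtain i where "(u, v) \<in> caret_ivs (F i) (real_of_int i) (real_of_int i + 1)"
    using assms by (auto simp: forest_carets_def)
  then show ?thesis using caret_ivs_children[of u v "F i"] by (auto simp: forest_nodes_def)
qed

lemma forest_elem_carets_iff:
  "(u, v) \<in> forest_elem_carets F \<longleftrightarrow>
   (u, v) \<in> forest_carets F \<and> (u, (u + v) / 2) \<in> forest_leaves F \<and> ((u + v) / 2, v) \<in> forest_leaves F"
proof (cases "(u, v) \<in> forest_carets F")
  case True
  then have node: "(u, v) \<in> forest_nodes F" by (simp add: forest_nodes_eq)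
  then have "u < v" using forest_nodes_bounds by blast
  then have "\<lfloor>(u + v) / 2\<rfloor> = \<lfloor>u\<rfloor>" using floor_inside_forest_node[OF node, of "(u + v) / 2"] by simp
  then show ?thesis
    using True elem_caret_ivs_iff[of "real_of_int \<lfloor>u\<rfloor>"]
    unfolding forest_elem_carets_iff_tree forest_carets_iff forest_leaves_iff[of _ "(u + v) / 2"]
    by (simp add: forest_leaves_iff)
next
  case False
  then show ?thesis
    using elem_caret_ivs_subset unfolding forest_elem_carets_iff_tree forest_carets_iff by blast
qed

lemma forest_leaves_overlap_eq:
  assumes "(u, v) \<in> forest_leaves F" "(u', v') \<in> forest_leaves F" "u < v'" "u' < v"
  shows "u = u' \<and> v = v'"
  using forest_nodes_laminar[of u v F u' v'] forest_leaf_minimal[OF assms(1), of u' v']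
    forest_leaf_minimal[OF assms(2), of u v] assms forest_nodes_eq by auto

lemma forest_leaves_cover: "\<exists>u v. (u, v) \<in> forest_leaves F \<and> u \<le> x \<and> x \<le> v"
proof -
  have "real_of_int \<lfloor>x\<rfloor> \<le> x" "x \<le> real_of_int \<lfloor>x\<rfloor> + 1" by linarith+
  then obtain u v where "(u, v) \<in> leaf_ivs (F \<lfloor>x\<rfloor>) \<lfloor>x\<rfloor> (real_of_int \<lfloor>x\<rfloor> + 1)" "u \<le> x" "x \<le> v"
    using leaf_ivs_cover by blast
  then show ?thesis unfolding forest_leaves_def by blast
qed

lemma forest_point_not_inside_leaf:
  assumes "p \<in> forest_points F" "(u, v) \<in> forest_leaves F" "u < p" "p < v"
  shows False
proof -
  obtain q where q: "(p, q) \<in> forest_leaves F" using assms(1) unfolding forest_points_def by auto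
  then show False using forest_leaves_overlap_eq[OF q assms(2)] forest_leaves_bounds[OF q] assms(3,4) by auto
qed

lemma forest_caret_contains_elem:
  "(u, v) \<in> forest_carets F \<Longrightarrow> \<exists>x y. (x, y) \<in> forest_elem_carets F \<and> u \<le> x \<and> y \<le> v"
  unfolding forest_carets_def forest_elem_carets_def using caret_ivs_contains_elem by fastforce

lemma forest_nodes_dyadic_desc:
  assumes "(u, v) \<in> forest_nodes F" "(x, y) \<in> forest_nodes F" "u \<le> x" "y \<le> v"
  shows "dyadic_desc (u, v) (x, y)"
proof -
  have "\<lfloor>x\<rfloor> = \<lfloor>u\<rfloor>"
    using assms floor_inside_forest_node[OF assms(1), of x] forest_nodes_bounds[OF assms(2)] by auto
  then show ?thesis
    using assms node_ivs_dyadic_desc unfolding forest_nodes_iff by force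
qed

lemma dyadic_desc_forest_caret:
  assumes "dyadic_desc K E" "K \<in> forest_nodes F"
    and "(p, q) \<in> forest_leaves F" "fst E \<le> p" "q \<le> snd E" "(p, q) \<noteq> E"
  shows "E \<in> forest_carets F"
  using assms
proof (induction rule: dyadic_desc.induct)
  case refl
  then show ?case using forest_leaf_minimal[of "fst K" "snd K" F p q] forest_nodes_eq by (cases K) auto
next
  case (left x y)
  have "p < q" using forest_leaves_bounds[OF left.prems(2)] by simp
  then have "(x, y) \<in> forest_carets F" using left by auto
  then show ?case
    using left.prems forest_caret_children forest_leaf_minimal[of x "(x + y) / 2" F p q] forest_nodes_eq
    by auto
next
  case (right x y)
  have "p < q" using forest_leaves_bounds[OF right.prems(2)] by simp
  then have "(x, y) \<in> forest_carets F" using right by auto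
  then show ?case
    using right.prems forest_caret_children forest_leaf_minimal[of "(x + y) / 2" y F p q] forest_nodes_eq
    by auto
qed

section \<open>Uniqueness of reduced forest diagrams\<close>

lemma forest_diagram_leaf:
  "forest_diagram f B T \<Longrightarrow> (u, v) \<in> forest_leaves B \<Longrightarrow> (f u, f v) \<in> forest_leaves T"
  unfolding forest_diagram_def by auto

lemma forest_diagram_affine:
  "forest_diagram f B T \<Longrightarrow> (u, v) \<in> forest_leaves B \<Longrightarrow>
   \<forall>t\<in>{u..v}. f t = f u + (f v - f u) / (v - u) * (t - u)"
  unfolding forest_diagram_def by fastforce

lemma forest_diagram_top_leaf:
  assumes "forest_diagram f B T" "strict_mono f" "surj f" "(c, d) \<in> forest_leaves T"
  shows "\<exists>u v. (u, v) \<in> forest_leaves B \<and> c = f u \<and> d = f v"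
proof -
  obtain t where t: "f t = (c + d) / 2" using assms(3) by (metis surj_def)
  obtain u v where uv: "(u, v) \<in> forest_leaves B" "u \<le> t" "t \<le> v"
    using forest_leaves_cover by blast
  have "f u \<le> f t" "f t \<le> f v" using uv strict_mono_less_eq[OF assms(2)] by auto
  then have "c = f u \<and> d = f v"
    using forest_leaves_overlap_eq[OF assms(4) forest_diagram_leaf[OF assms(1) uv(1)]] t
      forest_leaves_bounds[OF assms(4)] by auto
  then show ?thesis using uv(1) by blast
qed

definition forest_meet :: "forest \<Rightarrow> forest \<Rightarrow> forest" where
  "forest_meet F G = (\<lambda>i. meet (F i) (G i))"

lemma forest_meet_comm: "forest_meet F G = forest_meet G F"
  unfolding forest_meet_def using meet_comm by auto

lemma forest_leaves_meet: "forest_leaves (forest_meet F G) \<subseteq> forest_leaves F \<union> forest_leaves G"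
  unfolding forest_leaves_def forest_meet_def using leaf_ivs_meet by fastforce

lemma forest_nodes_meet: "forest_nodes (forest_meet F G) \<subseteq> forest_nodes F \<inter> forest_nodes G"
  unfolding forest_nodes_def forest_meet_def using node_ivs_meet by fastforce

lemma forest_leaves_meetI:
  assumes "(u, v) \<in> forest_leaves F" "(u, v) \<in> forest_nodes G"
  shows "(u, v) \<in> forest_leaves (forest_meet F G)"
  using assms leaf_ivs_meetI unfolding forest_leaves_iff forest_nodes_iff forest_meet_def by simp

lemma forest_nodes_if_not_crossing:
  assumes "(u, v) \<in> forest_nodes F"
    and "\<And>c d. (c, d) \<in> forest_leaves G \<Longrightarrow> (u \<le> c \<and> d \<le> v) \<or> d \<le> u \<or> v \<le> c"
  shows "(u, v) \<in> forest_nodes G"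
proof -
  have "(c, d) \<in> leaf_ivs (G \<lfloor>u\<rfloor>) \<lfloor>u\<rfloor> (real_of_int \<lfloor>u\<rfloor> + 1) \<Longrightarrow> (u \<le> c \<and> d \<le> v) \<or> d \<le> u \<or> v \<le> c"
    for c d using assms(2) unfolding forest_leaves_def by blast
  then show ?thesis
    using assms(1) node_ivs_if_not_crossing[of u v "F \<lfloor>u\<rfloor>"] unfolding forest_nodes_iff by simp
qed

lemma forest_meet_eq_left:
  assumes "forest_leaves (forest_meet F G) \<subseteq> forest_leaves F"
  shows "forest_meet F G = F"
proof -
  have "meet (F i) (G i) = F i" for i
  proof (rule meet_eq_left)
    show "leaf_ivs (meet (F i) (G i)) (real_of_int i) (real_of_int i + 1)
        \<subseteq> leaf_ivs (F i) (real_of_int i) (real_of_int i + 1)"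
    proof (clarify)
      fix c d assume cd: "(c, d) \<in> leaf_ivs (meet (F i) (G i)) (real_of_int i) (real_of_int i + 1)"
      then have i: "\<lfloor>c\<rfloor> = i" using node_ivs_unit_bounds node_ivs_eq by blast
      have "(c, d) \<in> forest_leaves (forest_meet F G)"
        using cd unfolding forest_leaves_def forest_meet_def by blast
      then show "(c, d) \<in> leaf_ivs (F i) (real_of_int i) (real_of_int i + 1)"
        using assms i forest_leaves_iff by blast
    qed
  qed simp
  then show ?thesis unfolding forest_meet_def by auto
qed

lemma forest_diagram_meet_leaf:
  assumes d1: "forest_diagram f B1 T1" and d2: "forest_diagram f B2 T2"
    and mono: "strict_mono f" and onto: "surj f"
    and leaf: "(u, v) \<in> forest_leaves B1" and node: "(u, v) \<in> forest_nodes B2"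
  shows "(f u, f v) \<in> forest_leaves (forest_meet T1 T2)"
proof (rule forest_leaves_meetI)
  show top_leaf: "(f u, f v) \<in> forest_leaves T1" using forest_diagram_leaf[OF d1 leaf] .
  show "(f u, f v) \<in> forest_nodes T2"
  proof (rule forest_nodes_if_not_crossing)
    show "(f u, f v) \<in> forest_nodes T1" using top_leaf forest_nodes_eq by blast
  next
    fix c d assume "(c, d) \<in> forest_leaves T2"
    then obtain u' v' where uv': "(u', v') \<in> forest_leaves B2" "c = f u'" "d = f v'"
      using forest_diagram_top_leaf[OF d2 mono onto] by blast
    then have "(u \<le> u' \<and> v' \<le> v) \<or> (u' \<le> u \<and> v \<le> v') \<or> v \<le> u' \<or> v' \<le> u"
      using forest_nodes_laminar[OF node] forest_nodes_eq by blast
    moreover have "u' \<le> u \<Longrightarrow> v \<le> v' \<Longrightarrow> u = u' \<and> v = v'"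
      using forest_leaf_minimal[OF uv'(1) node] by auto
    ultimately show "(f u \<le> c \<and> d \<le> f v) \<or> d \<le> f u \<or> f v \<le> c"
      using uv'(2,3) strict_mono_less_eq[OF mono] by auto
  qed
qed

lemma forest_diagram_meet:
  assumes d1: "forest_diagram f B1 T1" and d2: "forest_diagram f B2 T2"
    and mono: "strict_mono f" and onto: "surj f"
  shows "forest_diagram f (forest_meet B1 B2) (forest_meet T1 T2)"
  unfolding forest_diagram_def
proof (intro conjI)
  have "{i. forest_meet B1 B2 i \<noteq> Leaf} \<subseteq> {i. B1 i \<noteq> Leaf}"
    and "{i. forest_meet T1 T2 i \<noteq> Leaf} \<subseteq> {i. T1 i \<noteq> Leaf}"
    unfolding forest_meet_def by auto
  then show "binary_forest (forest_meet B1 B2)" "binary_forest (forest_meet T1 T2)"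
    using d1 finite_subset unfolding forest_diagram_def binary_forest_def by blast+
  show "\<forall>(u, v)\<in>forest_leaves (forest_meet B1 B2). (f u, f v) \<in> forest_leaves (forest_meet T1 T2) \<and>
        (\<forall>t\<in>{u..v}. f t = f u + (f v - f u) / (v - u) * (t - u))"
  proof (clarify)
    fix u v assume uv: "(u, v) \<in> forest_leaves (forest_meet B1 B2)"
    then have "(u, v) \<in> forest_nodes (forest_meet B1 B2)" by (simp add: forest_nodes_eq)
    then have nodes: "(u, v) \<in> forest_nodes B1" "(u, v) \<in> forest_nodes B2"
      using forest_nodes_meet by blast+
    have "(u, v) \<in> forest_leaves B1 \<or> (u, v) \<in> forest_leaves B2"
      using uv forest_leaves_meet by auto
    then show "(f u, f v) \<in> forest_leaves (forest_meet T1 T2) \<and>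
        (\<forall>t\<in>{u..v}. f t = f u + (f v - f u) / (v - u) * (t - u))"
    proof
      assume "(u, v) \<in> forest_leaves B1"
      then show ?thesis
        using forest_diagram_meet_leaf[OF d1 d2 mono onto _ nodes(2)] forest_diagram_affine[OF d1] by blast
    next
      assume "(u, v) \<in> forest_leaves B2"
      then show ?thesis
        using forest_diagram_meet_leaf[OF d2 d1 mono onto _ nodes(1)] forest_diagram_affine[OF d2]
          forest_meet_comm by metis
    qed
  qed
qed

lemma forest_diagram_elem_caret_image:
  assumes d: "forest_diagram f B T" and mono: "strict_mono f"
    and elem: "(x, z) \<in> forest_elem_carets B"
    and desc: "dyadic_desc K (f x, f z)" "K \<in> forest_nodes T"
    and mid: "f ((x + z) / 2) = (f x + f z) / 2"
  shows "(f x, f z) \<in> forest_elem_carets T"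
proof -
  let ?y = "(x + z) / 2"
  have "(x, z) \<in> forest_carets B" and L: "(x, ?y) \<in> forest_leaves B" and R: "(?y, z) \<in> forest_leaves B"
    using elem forest_elem_carets_iff by blast+
  then have "x < z" using forest_carets_bounds by blast
  then have "f x < f ?y" "f ?y < f z" using mono by (simp_all add: strict_mono_less)
  moreover have fL: "(f x, f ?y) \<in> forest_leaves T" using forest_diagram_leaf[OF d L] .
  ultimately have "(f x, f z) \<in> forest_carets T"
    using dyadic_desc_forest_caret[OF desc, of "f x" "f ?y"] by auto
  then show ?thesis
    using forest_elem_carets_iff fL forest_diagram_leaf[OF d R] mid by metis
qed

text \<open>A leaf of the coarsening that is a caret of B1 contains an elementary caret of B1, whose image
  would be an opposing elementary caret of T1.\<close>
lemma reduced_forest_diagram_meet_bottom: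
  assumes meet: "forest_diagram f (forest_meet B1 B2) (forest_meet T1 T2)"
    and red: "reduced_forest_diagram f B1 T1" and mono: "strict_mono f"
  shows "forest_meet B1 B2 = B1"
proof (rule ccontr)
  assume "forest_meet B1 B2 \<noteq> B1"
  then obtain u v where J: "(u, v) \<in> forest_leaves (forest_meet B1 B2)" "(u, v) \<notin> forest_leaves B1"
    using forest_meet_eq_left by fastforce
  then have "(u, v) \<in> forest_nodes (forest_meet B1 B2)" by (simp add: forest_nodes_eq)
  then have node: "(u, v) \<in> forest_nodes B1" using forest_nodes_meet by blast
  then have "(u, v) \<in> forest_carets B1" using J(2) by (simp add: forest_nodes_eq)
  then obtain x z where E: "(x, z) \<in> forest_elem_carets B1" "u \<le> x" "z \<le> v"
    using forest_caret_contains_elem by blast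
  then have Ez: "(x, z) \<in> forest_nodes B1" "x < z"
    using forest_elem_carets_iff forest_carets_subset_nodes forest_carets_bounds by blast+
  have uv: "u < v" using forest_nodes_bounds[OF node] by blast
  define c where "c = (f v - f u) / (v - u)"
  have affine: "\<And>t. u \<le> t \<Longrightarrow> t \<le> v \<Longrightarrow> f t = f u + c * (t - u)"
    using forest_diagram_affine[OF meet J(1)] unfolding c_def by (meson atLeastAtMost_iff)
  have "dyadic_desc (f u, f v) (f x, f z)"
    using dyadic_desc_affine_image[OF forest_nodes_dyadic_desc[OF node Ez(1) E(2,3)] uv affine] by simp
  moreover have "(f u, f v) \<in> forest_leaves (forest_meet T1 T2)" using forest_diagram_leaf[OF meet J(1)] .
  then have "(f u, f v) \<in> forest_nodes T1" using forest_leaves_subset_nodes forest_nodes_meet by blast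
  moreover have "f ((x + z) / 2) = (f x + f z) / 2"
    using affine[of x] affine[of z] affine[of "(x + z) / 2"] E(2,3) Ez(2) by (simp add: field_simps)
  ultimately have "(f x, f z) \<in> forest_elem_carets T1"
    using red mono E(1) forest_diagram_elem_caret_image unfolding reduced_forest_diagram_def by blast
  then show False using red E(1) unfolding reduced_forest_diagram_def by auto
qed

lemma forest_diagram_meet_top:
  assumes d1: "forest_diagram f B T1" and d2: "forest_diagram f B (forest_meet T1 T2)"
    and mono: "strict_mono f" and onto: "surj f"
  shows "forest_meet T1 T2 = T1"
proof (rule forest_meet_eq_left, clarify)
  fix c d assume "(c, d) \<in> forest_leaves (forest_meet T1 T2)"
  then obtain u v where "(u, v) \<in> forest_leaves B" "c = f u" "d = f v"
    using forest_diagram_top_leaf[OF d2 mono onto] by blast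
  then show "(c, d) \<in> forest_leaves T1" using forest_diagram_leaf[OF d1] by simp
qed

theorem reduced_forest_diagram_unique:
  assumes r1: "reduced_forest_diagram f B1 T1" and r2: "reduced_forest_diagram f B2 T2"
    and mono: "strict_mono f" and onto: "surj f"
  shows "B1 = B2 \<and> T1 = T2"
proof -
  have d1: "forest_diagram f B1 T1" and d2: "forest_diagram f B2 T2"
    using r1 r2 unfolding reduced_forest_diagram_def by blast+
  have m12: "forest_diagram f (forest_meet B1 B2) (forest_meet T1 T2)"
    and m21: "forest_diagram f (forest_meet B2 B1) (forest_meet T2 T1)"
    using forest_diagram_meet[OF d1 d2 mono onto] forest_diagram_meet[OF d2 d1 mono onto] .
  have B: "forest_meet B1 B2 = B1" "forest_meet B2 B1 = B2"
    using reduced_forest_diagram_meet_bottom[OF m12 r1 mono] reduced_forest_diagram_meet_bottom[OF m21 r2 mono] .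
  have "forest_meet T1 T2 = T1" "forest_meet T2 T1 = T2"
    using forest_diagram_meet_top[OF d1 _ mono onto] forest_diagram_meet_top[OF d2 _ mono onto] m12 m21 B
    by simp_all
  then show ?thesis using B forest_meet_comm by metis
qed

lemma ell_eq_reduced_diagram:
  assumes "reduced_forest_diagram f B T" "strict_mono f" "surj f"
  shows "ell f = ell0_diag f B T + ell1_diag B T"
  unfolding ell_def
  using assms reduced_forest_diagram_unique[OF assms(1) _ assms(2,3)] by (intro the_equality) blast+

section \<open>Elements of F are increasing bijections\<close>

lemma strict_mono_on_Un:
  fixes f :: "'a::linorder \<Rightarrow> 'b::order"
  assumes "strict_mono_on A f" "strict_mono_on B f" "c \<in> A" "c \<in> B" "\<forall>x\<in>A. x \<le> c" "\<forall>y\<in>B. c \<le> y"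
  shows "strict_mono_on (A \<union> B) f"
proof (rule strict_mono_onI)
  have le: "f x \<le> f c" "f c \<le> f y" if "x \<in> A" "y \<in> B" for x y
    using that assms strict_mono_onD[of A f x c] strict_mono_onD[of B f c y] by (auto simp: order_le_less)
  fix x y assume "x \<in> A \<union> B" "y \<in> A \<union> B" "x < y"
  then consider "x \<in> A" "y \<in> A" | "x \<in> B" "y \<in> B" | "x \<in> A" "y \<in> B" "x < c" | "x \<in> A" "y \<in> B" "c < y"
    using assms(5,6) by fastforce
  then show "f x < f y"
  proof cases
    case 3
    then show ?thesis using le strict_mono_onD[OF assms(1) _ assms(3)] by (meson order_less_le_trans)
  next
    case 4
    then show ?thesis using le strict_mono_onD[OF assms(2) assms(4)] by (meson order_le_less_trans)
  qed (use \<open>x < y\<close> assms(1,2) strict_mono_onD in blast)+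
qed

lemma strict_mono_continuous_on_affine:
  fixes f :: "real \<Rightarrow> real"
  assumes "\<forall>t\<in>S. f t = a + c * t" "0 < c"
  shows "strict_mono_on S f \<and> continuous_on S f"
proof
  show "strict_mono_on S f" using assms by (intro strict_mono_onI) simp
  have "continuous_on S (\<lambda>t. a + c * t)" by (intro continuous_intros)
  then show "continuous_on S f" using continuous_on_cong[of S S f "\<lambda>t. a + c * t"] assms(1) by simp
qed

lemma strict_mono_continuous_on_atMost_nth:
  fixes f :: "real \<Rightarrow> real"
  assumes sorted: "sorted_wrt (<) ps"
    and first: "strict_mono_on {..ps!0} f \<and> continuous_on {..ps!0} f"
    and piece: "\<And>i. Suc i < length ps \<Longrightarrow>
      strict_mono_on {ps!i..ps!Suc i} f \<and> continuous_on {ps!i..ps!Suc i} f"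
  shows "j < length ps \<Longrightarrow> strict_mono_on {..ps!j} f \<and> continuous_on {..ps!j} f"
proof (induction j)
  case (Suc j)
  have lt: "ps!j < ps!Suc j" using Suc.prems sorted by (simp add: sorted_wrt_iff_nth_less)
  then have split: "{..ps!Suc j} = {..ps!j} \<union> {ps!j..ps!Suc j}" by auto
  have "strict_mono_on {..ps!j} f" "continuous_on {..ps!j} f"
    and "strict_mono_on {ps!j..ps!Suc j} f" "continuous_on {ps!j..ps!Suc j} f"
    using Suc piece[of j] by simp_all
  then show ?case
    unfolding split using lt by (auto intro: strict_mono_on_Un continuous_on_closed_Un)
qed (use first in simp)

lemma surj_if_translation_at_infinity:
  fixes f :: "real \<Rightarrow> real"
  assumes "continuous_on UNIV f" "p \<le> q"
    and "\<And>t. t \<le> p \<Longrightarrow> f t = t - c" "\<And>t. q \<le> t \<Longrightarrow> f t = t - d"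
  shows "surj f"
proof -
  have "\<exists>t. f t = y" for y
  proof -
    define lo where "lo = min p (y + c)"
    define hi where "hi = max q (y + d)"
    have "f lo \<le> y" "y \<le> f hi" "lo \<le> hi" using assms(2-4) unfolding lo_def hi_def by auto
    then show ?thesis using IVT'[of f lo y hi] continuous_on_subset[OF assms(1)] by blast
  qed
  then show ?thesis by (metis surj_def)
qed

lemma in_F_strict_mono_surj:
  assumes "in_F f"
  shows "strict_mono f \<and> surj f"
proof -
  obtain ps :: "real list" and m n :: int where
    ne: "ps \<noteq> []" and sorted: "sorted_wrt (<) ps" and
    left: "\<forall>t. t \<le> hd ps \<longrightarrow> f t = t - real_of_int m" and
    right: "\<forall>t. last ps \<le> t \<longrightarrow> f t = t - real_of_int n" and
    pieces: "\<forall>i. Suc i < length ps \<longrightarrow> (\<exists>k::int. \<forall>t\<in>{ps!i..ps!Suc i}. f t = f (ps!i) + 2 powi k * (t - ps!i))"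
    using assms unfolding in_F_def by blast
  have hd: "hd ps = ps ! 0" and last: "last ps = ps ! (length ps - 1)"
    using ne by (simp_all add: hd_conv_nth last_conv_nth)
  have "strict_mono_on {ps!i..ps!Suc i} f \<and> continuous_on {ps!i..ps!Suc i} f"
    if i: "Suc i < length ps" for i
  proof -
    obtain k :: int where k: "\<forall>t\<in>{ps!i..ps!Suc i}. f t = f (ps!i) + 2 powi k * (t - ps!i)"
      using pieces i by blast
    define a where "a = f (ps!i) - 2 powi k * ps!i"
    have "\<forall>t\<in>{ps!i..ps!Suc i}. f t = a + 2 powi k * t"
      using k unfolding a_def by (auto simp: algebra_simps)
    then show ?thesis using strict_mono_continuous_on_affine[of "{ps!i..ps!Suc i}" f a "2 powi k"] by simp
  qed
  moreover have "strict_mono_on {..ps!0} f \<and> continuous_on {..ps!0} f"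
    using strict_mono_continuous_on_affine[of "{..ps!0}" f "- real_of_int m" 1] left hd by simp
  ultimately have initial: "strict_mono_on {..last ps} f" "continuous_on {..last ps} f"
    using strict_mono_continuous_on_atMost_nth[OF sorted, of f "length ps - 1"] ne last by auto
  have final: "strict_mono_on {last ps..} f" "continuous_on {last ps..} f"
    using strict_mono_continuous_on_affine[of "{last ps..}" f "- real_of_int n" 1] right by simp_all
  have univ: "UNIV = {..last ps} \<union> {last ps..}" by auto
  have "strict_mono f"
    using strict_mono_on_Un[OF initial(1) final(1)] univ by auto
  moreover have "continuous_on UNIV f"
    using continuous_on_closed_Un[OF _ _ initial(2) final(2)] univ by simp
  moreover have "hd ps \<le> last ps"
    using strict_sorted_imp_sorted[OF sorted] ne hd last sorted_nth_mono[of ps 0 "length ps - 1"] by simp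
  ultimately show ?thesis using surj_if_translation_at_infinity left right by blast
qed

section \<open>The top forest of x1 f\<close>

lemma x1_nonpos: "t \<le> 0 \<Longrightarrow> x1 t = t"
  and x1_ge_two: "2 \<le> t \<Longrightarrow> x1 t = t - 1"
  and x1_between: "0 \<le> t \<Longrightarrow> t \<le> 2 \<Longrightarrow> x1 t = t / 2"
  unfolding x1_def by auto

lemma strict_mono_x1: "strict_mono x1"
  unfolding strict_mono_def x1_def by auto

lemma surj_x1: "surj x1"
proof (rule surjI)
  fix y :: real
  show "x1 (if y \<le> 0 then y else if y \<le> 1 then 2 * y else y + 1) = y"
    unfolding x1_def by auto
qed

lemma leaf_ivs_translate: "leaf_ivs t (a + c) (b + c) = (\<lambda>(u, v). (u + c, v + c)) ` leaf_ivs t a b"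
proof (induction t arbitrary: a b)
  case (Node l r)
  have "(a + c + (b + c)) / 2 = (a + b) / 2 + c" by simp
  then show ?case by (simp only: leaf_ivs.simps Node.IH image_Un image_insert prod.case)
qed simp

lemma caret_ivs_translate: "caret_ivs t (a + c) (b + c) = (\<lambda>(u, v). (u + c, v + c)) ` caret_ivs t a b"
proof (induction t arbitrary: a b)
  case (Node l r)
  have "(a + c + (b + c)) / 2 = (a + b) / 2 + c" by simp
  then show ?case by (simp only: caret_ivs.simps Node.IH image_Un image_insert prod.case)
qed simp

lemma elem_caret_ivs_translate:
  "elem_caret_ivs t (a + c) (b + c) = (\<lambda>(u, v). (u + c, v + c)) ` elem_caret_ivs t a b"
proof (induction t arbitrary: a b)
  case (Node l r)
  have "(a + c + (b + c)) / 2 = (a + b) / 2 + c" by simp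
  then show ?case by (simp only: elem_caret_ivs.simps Node.IH) auto
qed simp

text \<open>Top forest of \<open>x1 \<circ> f\<close> when \<open>T 0\<close> and \<open>T 1\<close> are trivial: their leaves [0,1], [1,2] are mapped by
  \<open>x1\<close> onto the single leaf [0,1], and the trees \<open>T i\<close>, \<open>i \<ge> 2\<close>, move one step to the left.\<close>
definition x1_top :: "forest \<Rightarrow> forest" where
  "x1_top T = (\<lambda>i. if i = 0 then Leaf else if 1 \<le> i then T (i + 1) else T i)"

lemma x1_top_neg: "i < 0 \<Longrightarrow> x1_top T i = T i"
  and x1_top_zero: "x1_top T 0 = Leaf"
  and x1_top_pos: "1 \<le> i \<Longrightarrow> x1_top T i = T (i + 1)"
  unfolding x1_top_def by auto

lemma x1_unit_interval:
  assumes "real_of_int i \<le> u" "u < v" "v \<le> real_of_int i + 1"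
  shows "i < 0 \<Longrightarrow> map_prod x1 x1 (u, v) = (u, v)"
    and "2 \<le> i \<Longrightarrow> map_prod x1 x1 (u, v) = (u - 1, v - 1)"
proof -
  show "map_prod x1 x1 (u, v) = (u, v)" if "i < 0"
  proof -
    have "real_of_int i \<le> -1" using that by simp
    then show ?thesis using assms by (simp add: x1_nonpos)
  qed
  show "map_prod x1 x1 (u, v) = (u - 1, v - 1)" if "2 \<le> i"
  proof -
    have "2 \<le> real_of_int i" using that by simp
    then show ?thesis using assms by (simp add: x1_ge_two)
  qed
qed

lemma x1_top_ivs:
  fixes g :: "tree \<Rightarrow> real \<Rightarrow> real \<Rightarrow> (real \<times> real) set"
  assumes translate: "\<And>t a b c. g t (a + c) (b + c) = (\<lambda>(u, v). (u + c, v + c)) ` g t a b"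
    and Leaf: "\<And>a b. g Leaf a b = {}"
    and bounds: "\<And>t i u v. (u, v) \<in> g t (real_of_int i) (real_of_int i + 1) \<Longrightarrow>
      real_of_int i \<le> u \<and> u < v \<and> v \<le> real_of_int i + 1"
    and T0: "T 0 = Leaf" and T1: "T 1 = Leaf"
  shows "(\<Union>i. g (x1_top T i) (real_of_int i) (real_of_int i + 1))
    = map_prod x1 x1 ` (\<Union>i. g (T i) (real_of_int i) (real_of_int i + 1))"
proof -
  have shift: "g (T (i + 1)) (real_of_int i) (real_of_int i + 1)
      = (\<lambda>(u, v). (u - 1, v - 1)) ` g (T (i + 1)) (real_of_int (i + 1)) (real_of_int (i + 1) + 1)" for i
    using translate[of "T (i + 1)" "real_of_int (i + 1)" "-1" "real_of_int (i + 1) + 1"] by (simp add: ac_simps)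
  have left: "map_prod x1 x1 (u, v) = (u, v)"
    if "(u, v) \<in> g (T i) (real_of_int i) (real_of_int i + 1)" "i < 0" for u v i
    using x1_unit_interval(1) bounds[OF that(1)] that(2) by blast
  have right: "map_prod x1 x1 (u, v) = (u - 1, v - 1)"
    if "(u, v) \<in> g (T i) (real_of_int i) (real_of_int i + 1)" "2 \<le> i" for u v i
    using x1_unit_interval(2) bounds[OF that(1)] that(2) by blast
  show ?thesis
  proof (intro equalityI subsetI)
    fix K assume "K \<in> (\<Union>i. g (x1_top T i) (real_of_int i) (real_of_int i + 1))"
    then obtain i where i: "K \<in> g (x1_top T i) (real_of_int i) (real_of_int i + 1)" by blast
    consider "i = 0" | "1 \<le> i" | "i < 0" by linarith
    then show "K \<in> map_prod x1 x1 ` (\<Union>i. g (T i) (real_of_int i) (real_of_int i + 1))"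
    proof cases
      case 1
      then show ?thesis using i Leaf by (simp add: x1_top_def)
    next
      case 2
      then obtain u v where uv: "(u, v) \<in> g (T (i + 1)) (real_of_int (i + 1)) (real_of_int (i + 1) + 1)"
          "K = (u - 1, v - 1)"
        using i shift by (auto simp: x1_top_def)
      moreover have "2 \<le> i + 1" using 2 by simp
      ultimately have "K = map_prod x1 x1 (u, v)" using right[OF uv(1)] by simp
      then show ?thesis using uv(1) by blast
    next
      case 3
      then show ?thesis using i left by (cases K) (force simp: x1_top_def)
    qed
  next
    fix K assume "K \<in> map_prod x1 x1 ` (\<Union>i. g (T i) (real_of_int i) (real_of_int i + 1))"
    then obtain i u v where uv: "(u, v) \<in> g (T i) (real_of_int i) (real_of_int i + 1)"
      and K: "K = map_prod x1 x1 (u, v)" by auto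
    consider "i = 0" | "i = 1" | "2 \<le> i" | "i < 0" by linarith
    then show "K \<in> (\<Union>i. g (x1_top T i) (real_of_int i) (real_of_int i + 1))"
    proof cases
      case 3
      then have "K \<in> g (x1_top T (i - 1)) (real_of_int (i - 1)) (real_of_int (i - 1) + 1)"
        using uv K right[OF uv] shift[of "i - 1"] by (auto simp: x1_top_def)
      then show ?thesis by blast
    next
      case 4
      then have "K \<in> g (x1_top T i) (real_of_int i) (real_of_int i + 1)"
        using uv K left[OF uv] by (simp add: x1_top_def)
      then show ?thesis by blast
    qed (use uv Leaf T0 T1 in simp_all)
  qed
qed

lemma forest_carets_x1_top:
  "T 0 = Leaf \<Longrightarrow> T 1 = Leaf \<Longrightarrow> forest_carets (x1_top T) = map_prod x1 x1 ` forest_carets T"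
  unfolding forest_carets_def
  by (rule x1_top_ivs[where g = caret_ivs]) (auto simp: caret_ivs_translate dest: caret_ivs_bounds)

lemma forest_elem_carets_x1_top:
  "T 0 = Leaf \<Longrightarrow> T 1 = Leaf \<Longrightarrow> forest_elem_carets (x1_top T) = map_prod x1 x1 ` forest_elem_carets T"
  unfolding forest_elem_carets_def
  by (rule x1_top_ivs[where g = elem_caret_ivs])
    (auto simp: elem_caret_ivs_translate dest: elem_caret_ivs_bounds)

lemma forest_leaves_outside_0_2:
  assumes "T 0 = Leaf" "T 1 = Leaf" "(u, v) \<in> forest_leaves T" "(u, v) \<noteq> (0, 1)" "(u, v) \<noteq> (1, 2)"
  shows "v \<le> 0 \<or> 2 \<le> u"
proof -
  have "\<lfloor>u\<rfloor> \<noteq> 0" "\<lfloor>u\<rfloor> \<noteq> 1" using assms unfolding forest_leaves_iff by (auto simp del: floor_eq_iff)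
  then show ?thesis using forest_leaves_bounds[OF assms(3)] by linarith
qed

lemma forest_leaves_x1_top:
  assumes T0: "T 0 = Leaf" and T1: "T 1 = Leaf"
    and uv: "(u, v) \<in> forest_leaves T" "v \<le> 0 \<or> 2 \<le> u"
  shows "(x1 u, x1 v) \<in> forest_leaves (x1_top T)"
  using uv(2)
proof
  assume "v \<le> 0"
  moreover have "u < v" using forest_leaves_bounds[OF uv(1)] by auto
  ultimately have "\<lfloor>u\<rfloor> < 0" by (simp add: floor_less_iff)
  then have "x1_top T \<lfloor>u\<rfloor> = T \<lfloor>u\<rfloor>" by (rule x1_top_neg)
  then show ?thesis
    using uv(1) \<open>u < v\<close> \<open>v \<le> 0\<close> unfolding forest_leaves_iff by (simp add: x1_nonpos)
next
  assume u: "2 \<le> u"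
  then have k: "2 \<le> \<lfloor>u\<rfloor>" and "u < v" using forest_leaves_bounds[OF uv(1)] by auto
  have "(u - 1, v - 1) \<in> leaf_ivs (T \<lfloor>u\<rfloor>) (real_of_int \<lfloor>u\<rfloor> + -1) (real_of_int \<lfloor>u\<rfloor> + 1 + -1)"
    using uv(1) unfolding forest_leaves_iff leaf_ivs_translate by force
  then have "(u - 1, v - 1) \<in> leaf_ivs (x1_top T (\<lfloor>u\<rfloor> - 1)) (real_of_int (\<lfloor>u\<rfloor> - 1)) (real_of_int (\<lfloor>u\<rfloor> - 1) + 1)"
    using k x1_top_pos[of "\<lfloor>u\<rfloor> - 1" T] by simp
  then have "(u - 1, v - 1) \<in> forest_leaves (x1_top T)" unfolding forest_leaves_def by blast
  then show ?thesis using u \<open>u < v\<close> by (simp add: x1_ge_two)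
qed

lemma unit_leaf_x1_top: "(0, 1) \<in> forest_leaves (x1_top T)"
  using forest_leaves_iff[of 0 1 "x1_top T"] by (simp add: x1_top_zero)

lemma nontrivial_trees_x1_top:
  assumes "T 0 = Leaf" "T 1 = Leaf"
  defines "h \<equiv> \<lambda>j::int. if 2 \<le> j then j - 1 else j"
  shows "inj_on h {i. T i \<noteq> Leaf}" "h ` {i. T i \<noteq> Leaf} = {i. x1_top T i \<noteq> Leaf}"
    and "\<And>j. T j \<noteq> Leaf \<Longrightarrow> x1_top T (h j) = T j"
proof -
  show shift: "x1_top T (h j) = T j" if "T j \<noteq> Leaf" for j
  proof -
    have "j \<noteq> 0" "j \<noteq> 1" using that assms by auto
    then show ?thesis by (auto simp: x1_top_def h_def)
  qed
  show "inj_on h {i. T i \<noteq> Leaf}" using assms by (auto simp: inj_on_def h_def split: if_splits)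
  show "h ` {i. T i \<noteq> Leaf} = {i. x1_top T i \<noteq> Leaf}"
  proof (intro equalityI subsetI)
    fix i assume "i \<in> {i. x1_top T i \<noteq> Leaf}"
    then have "T (if 1 \<le> i then i + 1 else i) \<noteq> Leaf" "h (if 1 \<le> i then i + 1 else i) = i"
      by (auto simp: x1_top_def h_def split: if_splits)
    then show "i \<in> h ` {i. T i \<noteq> Leaf}" by force
  next
    fix i assume "i \<in> h ` {i. T i \<noteq> Leaf}"
    then show "i \<in> {i. x1_top T i \<noteq> Leaf}" using shift by force
  qed
qed

lemma binary_forest_x1_top:
  assumes "binary_forest T" "T 0 = Leaf" "T 1 = Leaf"
  shows "binary_forest (x1_top T)"
proof -
  have "finite ((\<lambda>j::int. if 2 \<le> j then j - 1 else j) ` {i. T i \<noteq> Leaf})"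
    using assms(1) unfolding binary_forest_def by (rule finite_imageI)
  then show ?thesis unfolding binary_forest_def nontrivial_trees_x1_top(2)[OF assms(2,3)] .
qed

lemma sum_ncarets_x1_top:
  assumes "T 0 = Leaf" "T 1 = Leaf"
  shows "(\<Sum>i\<in>{i. x1_top T i \<noteq> Leaf}. ncarets (x1_top T i)) = (\<Sum>i\<in>{i. T i \<noteq> Leaf}. ncarets (T i))"
  by (rule sum.reindex_cong[OF nontrivial_trees_x1_top(1)[OF assms]
        nontrivial_trees_x1_top(2)[OF assms, symmetric]])
    (simp add: nontrivial_trees_x1_top(3)[OF assms])

fun prune_caret :: "real \<Rightarrow> real \<Rightarrow> tree \<Rightarrow> real \<Rightarrow> real \<Rightarrow> tree" where
  "prune_caret a b Leaf \<alpha> \<beta> = Leaf"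
| "prune_caret a b (Node l r) \<alpha> \<beta> =
     (if \<alpha> = a \<and> \<beta> = b \<and> l = Leaf \<and> r = Leaf then Leaf
      else Node (prune_caret a b l \<alpha> ((\<alpha> + \<beta>) / 2)) (prune_caret a b r ((\<alpha> + \<beta>) / 2) \<beta>))"

lemma prune_caret_id: "(a, b) \<notin> caret_ivs t \<alpha> \<beta> \<Longrightarrow> prune_caret a b t \<alpha> \<beta> = t"
  by (induction t arbitrary: \<alpha> \<beta>) auto

lemma prune_caret:
  assumes "(a, b) \<in> elem_caret_ivs t \<alpha> \<beta>" "\<alpha> < \<beta>"
  shows "leaf_ivs (prune_caret a b t \<alpha> \<beta>) \<alpha> \<beta> = leaf_ivs t \<alpha> \<beta> - {(a, (a + b) / 2), ((a + b) / 2, b)} \<union> {(a, b)}"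
      (is ?leaves)
    and "caret_ivs (prune_caret a b t \<alpha> \<beta>) \<alpha> \<beta> = caret_ivs t \<alpha> \<beta> - {(a, b)}" (is ?carets)
    and "Suc (ncarets (prune_caret a b t \<alpha> \<beta>)) = ncarets t" (is ?count)
proof -
  have "?leaves \<and> ?carets \<and> ?count"
    using assms
  proof (induction t arbitrary: \<alpha> \<beta>)
    case (Node l r)
    define m where "m = (\<alpha> + \<beta>) / 2"
    have m: "\<alpha> < m" "m < \<beta>" using Node.prems by (auto simp: m_def)
    have lb: "\<And>u v. (u, v) \<in> leaf_ivs l \<alpha> m \<Longrightarrow> \<alpha> \<le> u \<and> u < v \<and> v \<le> m"
      and rb: "\<And>u v. (u, v) \<in> leaf_ivs r m \<beta> \<Longrightarrow> m \<le> u \<and> u < v \<and> v \<le> \<beta>"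
      and lc: "\<And>u v. (u, v) \<in> caret_ivs l \<alpha> m \<Longrightarrow> \<alpha> \<le> u \<and> u < v \<and> v \<le> m"
      and rc: "\<And>u v. (u, v) \<in> caret_ivs r m \<beta> \<Longrightarrow> m \<le> u \<and> u < v \<and> v \<le> \<beta>"
      using leaf_ivs_bounds caret_ivs_bounds m by blast+
    show ?case
    proof (cases "l = Leaf \<and> r = Leaf")
      case True
      then have "(a, b) = (\<alpha>, \<beta>)" using Node.prems by auto
      then show ?thesis using True by (auto simp: m_def)
    next
      case False
      then have "(a, b) \<in> elem_caret_ivs l \<alpha> m \<or> (a, b) \<in> elem_caret_ivs r m \<beta>"
        using Node.prems(1) by (auto simp: m_def)
      then show ?thesis
      proof
        assume left: "(a, b) \<in> elem_caret_ivs l \<alpha> m"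
        then have ab: "\<alpha> \<le> a" "a < b" "b \<le> m" using lc elem_caret_ivs_subset by blast+
        then have "(a, b) \<notin> caret_ivs r m \<beta>" using rc[of a b] by auto
        then have "prune_caret a b (Node l r) \<alpha> \<beta> = Node (prune_caret a b l \<alpha> m) r"
          using ab m prune_caret_id by (auto simp: m_def)
        moreover have "(a, (a + b) / 2) \<notin> leaf_ivs r m \<beta>" "((a + b) / 2, b) \<notin> leaf_ivs r m \<beta>"
          using rb[of a "(a + b) / 2"] rb[of "(a + b) / 2" b] ab by auto
        ultimately show ?thesis using Node.IH(1)[OF left m(1)] \<open>(a, b) \<notin> caret_ivs r m \<beta>\<close> ab m
          by (auto simp: m_def)
      next
        assume right: "(a, b) \<in> elem_caret_ivs r m \<beta>"
        then have ab: "m \<le> a" "a < b" "b \<le> \<beta>" using rc elem_caret_ivs_subset by blast+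
        then have "(a, b) \<notin> caret_ivs l \<alpha> m" using lc[of a b] by auto
        then have "prune_caret a b (Node l r) \<alpha> \<beta> = Node l (prune_caret a b r m \<beta>)"
          using ab m prune_caret_id by (auto simp: m_def)
        moreover have "(a, (a + b) / 2) \<notin> leaf_ivs l \<alpha> m" "((a + b) / 2, b) \<notin> leaf_ivs l \<alpha> m"
          using lb[of a "(a + b) / 2"] lb[of "(a + b) / 2" b] ab by auto
        ultimately show ?thesis using Node.IH(2)[OF right m(2)] \<open>(a, b) \<notin> caret_ivs l \<alpha> m\<close> ab m
          by (auto simp: m_def)
      qed
    qed
  qed simp
  then show ?leaves ?carets ?count by blast+
qed

definition prune_forest :: "real \<Rightarrow> real \<Rightarrow> forest \<Rightarrow> forest" where
  "prune_forest a b B = B(\<lfloor>a\<rfloor> := prune_caret a b (B \<lfloor>a\<rfloor>) (real_of_int \<lfloor>a\<rfloor>) (real_of_int \<lfloor>a\<rfloor> + 1))"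

lemma forest_elem_caret_floors:
  assumes "(a, b) \<in> forest_elem_carets B"
  shows "a < b" "\<lfloor>(a + b) / 2\<rfloor> = \<lfloor>a\<rfloor>"
    and "(a, b) \<in> elem_caret_ivs (B \<lfloor>a\<rfloor>) (real_of_int \<lfloor>a\<rfloor>) (real_of_int \<lfloor>a\<rfloor> + 1)"
proof -
  have "(a, b) \<in> forest_nodes B" using assms forest_elem_carets_iff forest_carets_subset_nodes by blast
  moreover from this show "a < b" using forest_nodes_bounds by blast
  ultimately show "\<lfloor>(a + b) / 2\<rfloor> = \<lfloor>a\<rfloor>" using floor_inside_forest_node[of a b B "(a + b) / 2"] by simp
  show "(a, b) \<in> elem_caret_ivs (B \<lfloor>a\<rfloor>) (real_of_int \<lfloor>a\<rfloor>) (real_of_int \<lfloor>a\<rfloor> + 1)"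
    using assms forest_elem_carets_iff_tree by blast
qed

lemma forest_leaves_prune:
  assumes "(a, b) \<in> forest_elem_carets B"
  shows "forest_leaves (prune_forest a b B)
    = forest_leaves B - {(a, (a + b) / 2), ((a + b) / 2, b)} \<union> {(a, b)}"
proof (intro set_eqI)
  fix K :: "real \<times> real"
  obtain u v where K: "K = (u, v)" by (cases K)
  note ab = forest_elem_caret_floors[OF assms]
  show "K \<in> forest_leaves (prune_forest a b B) \<longleftrightarrow>
    K \<in> forest_leaves B - {(a, (a + b) / 2), ((a + b) / 2, b)} \<union> {(a, b)}"
  proof (cases "\<lfloor>u\<rfloor> = \<lfloor>a\<rfloor>")
    case True
    have "K \<in> forest_leaves (prune_forest a b B) \<longleftrightarrow>
        K \<in> leaf_ivs (B \<lfloor>a\<rfloor>) \<lfloor>a\<rfloor> (real_of_int \<lfloor>a\<rfloor> + 1) - {(a, (a + b) / 2), ((a + b) / 2, b)} \<union> {(a, b)}"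
      unfolding K forest_leaves_iff[of u v] True prune_forest_def using prune_caret(1)[OF ab(3)] by simp
    moreover have "K \<in> forest_leaves B \<longleftrightarrow> K \<in> leaf_ivs (B \<lfloor>a\<rfloor>) \<lfloor>a\<rfloor> (real_of_int \<lfloor>a\<rfloor> + 1)"
      unfolding K forest_leaves_iff[of u v] True ..
    ultimately show ?thesis by blast
  next
    case False
    then have "u \<noteq> a" "u \<noteq> (a + b) / 2" using ab(2) by metis+
    then have "K \<notin> {(a, (a + b) / 2), ((a + b) / 2, b), (a, b)}" using K by auto
    moreover have "prune_forest a b B \<lfloor>u\<rfloor> = B \<lfloor>u\<rfloor>" using False by (simp add: prune_forest_def)
    ultimately show ?thesis
      using forest_leaves_iff[of u v B] forest_leaves_iff[of u v "prune_forest a b B"] K by auto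
  qed
qed

lemma forest_carets_prune:
  assumes "(a, b) \<in> forest_elem_carets B"
  shows "forest_carets (prune_forest a b B) = forest_carets B - {(a, b)}"
proof (intro set_eqI)
  fix K :: "real \<times> real"
  obtain u v where K: "K = (u, v)" by (cases K)
  note ab = forest_elem_caret_floors[OF assms]
  show "K \<in> forest_carets (prune_forest a b B) \<longleftrightarrow> K \<in> forest_carets B - {(a, b)}"
  proof (cases "\<lfloor>u\<rfloor> = \<lfloor>a\<rfloor>")
    case True
    then show ?thesis
      using forest_carets_iff[of u v B] forest_carets_iff[of u v "prune_forest a b B"] K
        prune_caret(2)[OF ab(3)] by (simp add: prune_forest_def)
  next
    case False
    then have "K \<noteq> (a, b)" using K by auto
    moreover have "prune_forest a b B \<lfloor>u\<rfloor> = B \<lfloor>u\<rfloor>" using False by (simp add: prune_forest_def)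
    ultimately show ?thesis
      using forest_carets_iff[of u v B] forest_carets_iff[of u v "prune_forest a b B"] K by auto
  qed
qed

lemma binary_forest_prune: "binary_forest B \<Longrightarrow> binary_forest (prune_forest a b B)"
proof -
  assume "binary_forest B"
  moreover have "{i. prune_forest a b B i \<noteq> Leaf} \<subseteq> insert \<lfloor>a\<rfloor> {i. B i \<noteq> Leaf}"
    by (auto simp: prune_forest_def)
  ultimately show ?thesis unfolding binary_forest_def using finite_subset by blast
qed

lemma sum_ncarets_prune:
  assumes "(a, b) \<in> forest_elem_carets B" "binary_forest B"
  shows "(\<Sum>i\<in>{i. prune_forest a b B i \<noteq> Leaf}. ncarets (prune_forest a b B i)) + 1
    = (\<Sum>i\<in>{i. B i \<noteq> Leaf}. ncarets (B i))"
proof -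
  let ?S = "{i. B i \<noteq> Leaf}" and ?B' = "prune_forest a b B"
  have fin: "finite ?S" using assms(2) unfolding binary_forest_def .
  have tree: "(a, b) \<in> elem_caret_ivs (B \<lfloor>a\<rfloor>) (real_of_int \<lfloor>a\<rfloor>) (real_of_int \<lfloor>a\<rfloor> + 1)"
    using forest_elem_caret_floors(3)[OF assms(1)] .
  then have a: "\<lfloor>a\<rfloor> \<in> ?S" by auto
  have "(\<Sum>i\<in>{i. ?B' i \<noteq> Leaf}. ncarets (?B' i)) = (\<Sum>i\<in>?S. ncarets (?B' i))"
    using a by (intro sum.mono_neutral_left[OF fin]) (auto simp: prune_forest_def)
  also have "\<dots> = ncarets (?B' \<lfloor>a\<rfloor>) + (\<Sum>i\<in>?S - {\<lfloor>a\<rfloor>}. ncarets (?B' i))"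
    using sum.remove[OF fin a, of "\<lambda>i. ncarets (?B' i)"] .
  also have "(\<Sum>i\<in>?S - {\<lfloor>a\<rfloor>}. ncarets (?B' i)) = (\<Sum>i\<in>?S - {\<lfloor>a\<rfloor>}. ncarets (B i))"
    by (intro sum.cong) (auto simp: prune_forest_def)
  finally show ?thesis
    using sum.remove[OF fin a, of "\<lambda>i. ncarets (B i)"] prune_caret(3)[OF tree]
    by (simp add: prune_forest_def)
qed

lemma space_label_eqI:
  assumes "q \<in> \<int> \<longleftrightarrow> q' \<in> \<int>" "q \<le> 0 \<longleftrightarrow> q' \<le> 0"
    and "(\<exists>w. (q, w) \<in> forest_carets F) \<longleftrightarrow> (\<exists>w. (q', w) \<in> forest_carets F')"
  shows "space_label F q = space_label F' q'"
  using assms unfolding space_label_def by simp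

lemma space_label_LL_iff: "space_label F q = LL \<longleftrightarrow> q \<in> \<int> \<and> q \<le> 0"
  unfolding space_label_def by auto

lemma weight_LL: "weight LL l = (if l = LL then 2 else 1)"
  by (cases l) auto

locale x1_cancels_bottom_caret =
  fixes f :: "real \<Rightarrow> real" and B T :: forest and a b :: real
  assumes reduced: "reduced_forest_diagram f B T"
    and mono: "strict_mono f" and onto: "surj f"
    and T0: "T 0 = Leaf" and T1: "T 1 = Leaf"
    and elem: "(a, b) \<in> forest_elem_carets B" and fa: "f a = 0" and fb: "f b = 2"
begin

abbreviation "mid \<equiv> (a + b) / 2"

lemma diagram: "forest_diagram f B T"
  using reduced unfolding reduced_forest_diagram_def by blast

lemma mid_bounds: "a < b" "a < mid" "mid < b" "\<lfloor>mid\<rfloor> = \<lfloor>a\<rfloor>"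
  using forest_elem_caret_floors[OF elem] by auto

lemma caret_ab: "(a, b) \<in> forest_carets B"
  and leaf_a_mid: "(a, mid) \<in> forest_leaves B" and leaf_mid_b: "(mid, b) \<in> forest_leaves B"
  using elem forest_elem_carets_iff by blast+

lemma f_mid: "f mid = 1"
proof -
  have "(0, f mid) \<in> forest_leaves T" using forest_diagram_leaf[OF diagram leaf_a_mid] fa by simp
  then show ?thesis using T0 forest_leaves_iff[of 0 "f mid" T] by simp
qed

lemma other_leaf_outside:
  assumes "(u, v) \<in> forest_leaves B" "(u, v) \<noteq> (a, mid)" "(u, v) \<noteq> (mid, b)"
  shows "f v \<le> 0 \<or> 2 \<le> f u"
proof (rule forest_leaves_outside_0_2[OF T0 T1 forest_diagram_leaf[OF diagram assms(1)]])
  show "(f u, f v) \<noteq> (0, 1)" "(f u, f v) \<noteq> (1, 2)"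
    using assms(2,3) fa fb f_mid strict_mono_eq[OF mono] by (metis prod.inject)+
qed

lemma x1_comp_merged_leaf:
  assumes "a \<le> t" "t \<le> b"
  shows "x1 (f t) = (t - a) / (b - a)"
proof -
  define q where "q = (t - a) / (b - a)"
  have "f t = 2 * ((t - a) / (b - a))"
  proof (cases "t \<le> mid")
    case True
    then show ?thesis
      using bspec[OF forest_diagram_affine[OF diagram leaf_a_mid], of t] assms fa f_mid mid_bounds by (simp add: field_simps)
  next
    case False
    then show ?thesis
      using bspec[OF forest_diagram_affine[OF diagram leaf_mid_b], of t] assms fb f_mid mid_bounds by (simp add: field_simps)
  qed
  moreover have "0 \<le> q" "q \<le> 1" using assms mid_bounds unfolding q_def by auto
  ultimately show ?thesis unfolding q_def[symmetric] by (simp add: x1_between)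
qed

lemma x1_comp_other_leaf:
  assumes "(u, v) \<in> forest_leaves B" "(u, v) \<noteq> (a, mid)" "(u, v) \<noteq> (mid, b)" "u \<le> t" "t \<le> v"
  shows "x1 (f t) = f t - (if f v \<le> 0 then 0 else 1)"
proof -
  have "f u \<le> f t" "f t \<le> f v" using assms(4,5) strict_mono_less_eq[OF mono] by auto
  then show ?thesis using other_leaf_outside[OF assms(1-3)] by (auto simp: x1_nonpos x1_ge_two)
qed

lemma diagram_x1: "forest_diagram (x1 \<circ> f) (prune_forest a b B) (x1_top T)"
  unfolding forest_diagram_def
proof (intro conjI)
  show "binary_forest (prune_forest a b B)" "binary_forest (x1_top T)"
    using diagram binary_forest_prune binary_forest_x1_top T0 T1 unfolding forest_diagram_def by blast+
  show "\<forall>(u, v)\<in>forest_leaves (prune_forest a b B). ((x1 \<circ> f) u, (x1 \<circ> f) v) \<in> forest_leaves (x1_top T) \<and>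
      (\<forall>t\<in>{u..v}. (x1 \<circ> f) t = (x1 \<circ> f) u + ((x1 \<circ> f) v - (x1 \<circ> f) u) / (v - u) * (t - u))"
  proof (clarify)
    fix u v assume "(u, v) \<in> forest_leaves (prune_forest a b B)"
    then consider "(u, v) = (a, b)" | "(u, v) \<in> forest_leaves B" "(u, v) \<noteq> (a, mid)" "(u, v) \<noteq> (mid, b)"
      using forest_leaves_prune[OF elem] by blast
    then show "((x1 \<circ> f) u, (x1 \<circ> f) v) \<in> forest_leaves (x1_top T) \<and>
      (\<forall>t\<in>{u..v}. (x1 \<circ> f) t = (x1 \<circ> f) u + ((x1 \<circ> f) v - (x1 \<circ> f) u) / (v - u) * (t - u))"
    proof cases
      case 1
      have "x1 (f a) = 0" "x1 (f b) = 1" using fa fb by (simp_all add: x1_def)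
      moreover have "x1 (f t) = (t - a) / (b - a)" if "t \<in> {a..b}" for t
        using x1_comp_merged_leaf that by simp
      ultimately show ?thesis using 1 unit_leaf_x1_top by simp
    next
      case 2
      let ?d = "if f v \<le> 0 then 0 else 1 :: real"
      have "f u < f v" using forest_leaves_bounds[OF 2(1)] mono by (simp add: strict_mono_less)
      then have "x1 (f u) = f u - ?d" "x1 (f v) = f v - ?d"
        using x1_comp_other_leaf[OF 2] forest_leaves_bounds[OF 2(1)] by simp_all
      moreover have "x1 (f t) = f u + (f v - f u) / (v - u) * (t - u) - ?d" if "t \<in> {u..v}" for t
        using x1_comp_other_leaf[OF 2, of t] bspec[OF forest_diagram_affine[OF diagram 2(1)] that] that
        by simp
      ultimately show ?thesis
        using forest_leaves_x1_top[OF T0 T1 forest_diagram_leaf[OF diagram 2(1)] other_leaf_outside[OF 2]]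
        by simp
    qed
  qed
qed

text \<open>A bottom caret that has become elementary has (a, b) as a child; its image would
  then reach from \<open>f x \<le> 0\<close> to \<open>f z \<ge> 2\<close>, longer than any caret of T.\<close>
lemma reduced_x1: "reduced_forest_diagram (x1 \<circ> f) (prune_forest a b B) (x1_top T)"
  unfolding reduced_forest_diagram_def
proof (intro conjI diagram_x1 notI)
  assume "\<exists>(x, z)\<in>forest_elem_carets (prune_forest a b B).
    ((x1 \<circ> f) x, (x1 \<circ> f) z) \<in> forest_elem_carets (x1_top T)"
  then obtain x z where xz: "(x, z) \<in> forest_elem_carets (prune_forest a b B)"
      "(x1 (f x), x1 (f z)) \<in> forest_elem_carets (x1_top T)" by auto
  let ?y = "(x + z) / 2"
  have children: "(x, ?y) \<in> forest_leaves (prune_forest a b B)" "(?y, z) \<in> forest_leaves (prune_forest a b B)"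
    and "(x, z) \<in> forest_carets (prune_forest a b B)"
    using xz(1) forest_elem_carets_iff by blast+
  then have caret: "(x, z) \<in> forest_carets B" "x < z"
    using forest_carets_prune[OF elem] forest_carets_bounds by auto
  have top: "(f x, f z) \<in> forest_elem_carets T"
    using xz(2) forest_elem_carets_x1_top[OF T0 T1] strict_mono_eq[OF strict_mono_x1] by auto
  show False
  proof (cases "(x, ?y) \<in> forest_leaves B \<and> (?y, z) \<in> forest_leaves B")
    case True
    then have "(x, z) \<in> forest_elem_carets B" using caret forest_elem_carets_iff by blast
    then show False using reduced top unfolding reduced_forest_diagram_def by auto
  next
    case False
    then have "(x, ?y) = (a, b) \<or> (?y, z) = (a, b)" using children forest_leaves_prune[OF elem] by blast
    then have "x \<le> a" "b \<le> z" using caret(2) by auto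
    then have "f x \<le> 0" "2 \<le> f z" using strict_mono_less_eq[OF mono] fa fb by metis+
    moreover have "f z \<le> real_of_int \<lfloor>f x\<rfloor> + 1"
      using forest_carets_bounds top forest_elem_carets_iff by blast
    moreover have "real_of_int \<lfloor>f x\<rfloor> \<le> f x" by (rule of_int_floor_le)
    ultimately show False by linarith
  qed
qed

lemma ell1_x1: "ell1_diag (prune_forest a b B) (x1_top T) + 1 = ell1_diag B T"
  using sum_ncarets_prune[OF elem] sum_ncarets_x1_top[OF T0 T1] diagram
  unfolding ell1_diag_def forest_diagram_def by simp

lemma point_outside_caret: "p \<in> forest_points B \<Longrightarrow> p \<noteq> mid \<Longrightarrow> p \<le> a \<or> b \<le> p"
  using forest_point_not_inside_leaf[OF _ leaf_a_mid] forest_point_not_inside_leaf[OF _ leaf_mid_b] by fastforce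

lemma points_x1: "forest_points (prune_forest a b B) = forest_points B - {mid}"
proof (intro equalityI subsetI)
  fix p assume "p \<in> forest_points (prune_forest a b B)"
  then obtain q where "(p, q) \<in> forest_leaves B - {(a, mid), (mid, b)} \<union> {(a, b)}"
    using forest_leaves_prune[OF elem] unfolding forest_points_def by auto
  then consider "p = a" | "(p, q) \<in> forest_leaves B" "(p, q) \<noteq> (mid, b)" by auto
  then show "p \<in> forest_points B - {mid}"
  proof cases
    case 1
    then show ?thesis using leaf_a_mid mid_bounds unfolding forest_points_def by auto
  next
    case 2
    then have "p \<noteq> mid" using forest_leaves_overlap_eq[OF 2(1) leaf_mid_b] forest_leaves_bounds mid_bounds by force
    then show ?thesis using 2(1) unfolding forest_points_def by auto
  qed
next
  fix p assume "p \<in> forest_points B - {mid}"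
  then obtain q where "(p, q) \<in> forest_leaves B" "p \<noteq> mid" unfolding forest_points_def by auto
  then have "(p, if (p, q) = (a, mid) then b else q) \<in> forest_leaves (prune_forest a b B)"
    using forest_leaves_prune[OF elem] by auto
  then show "p \<in> forest_points (prune_forest a b B)" unfolding forest_points_def by blast
qed

lemma nontrivial_tree_prune:
  assumes "(u, v) \<in> forest_leaves B" "(u, v) \<noteq> (a, mid)" "(u, v) \<noteq> (mid, b)"
  shows "prune_forest a b B \<lfloor>u\<rfloor> \<noteq> Leaf \<longleftrightarrow> B \<lfloor>u\<rfloor> \<noteq> Leaf"
proof (cases "\<lfloor>u\<rfloor> = \<lfloor>a\<rfloor>")
  case True
  have "(u, v) \<noteq> (a, b)" using assms(1) forest_caret_not_leaf[OF caret_ab] by auto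
  moreover have "(u, v) \<in> forest_leaves (prune_forest a b B)" "(a, b) \<in> forest_leaves (prune_forest a b B)"
    using assms forest_leaves_prune[OF elem] by auto
  ultimately have "prune_forest a b B \<lfloor>a\<rfloor> \<noteq> Leaf"
    using True forest_leaves_iff[of u v] forest_leaves_iff[of a b] by auto
  moreover have "B \<lfloor>a\<rfloor> \<noteq> Leaf" using caret_ab forest_carets_iff[of a b B] by auto
  ultimately show ?thesis using True by simp
qed (simp add: prune_forest_def)

lemma column_x1:
  assumes "(u, v) \<in> forest_leaves B" "(u, v) \<noteq> (a, mid)" "(u, v) \<noteq> (mid, b)"
  shows "support_column (x1 \<circ> f) (prune_forest a b B) (x1_top T) u v = support_column f B T u v"
proof -
  have "f u < f v" using forest_leaves_bounds[OF assms(1)] mono by (simp add: strict_mono_less)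
  moreover have "x1_top T \<lfloor>x1 (f u)\<rfloor> = T \<lfloor>f u\<rfloor>"
  proof (cases "f v \<le> 0")
    case True
    then have "\<lfloor>f u\<rfloor> < 0" using \<open>f u < f v\<close> by (simp add: floor_less_iff)
    then show ?thesis using \<open>f u < f v\<close> True by (simp add: x1_nonpos x1_top_neg)
  next
    case False
    then have "2 \<le> f u" using other_leaf_outside[OF assms] by simp
    then have "1 \<le> \<lfloor>f u\<rfloor> - 1" by (simp add: le_floor_iff)
    then show ?thesis using \<open>2 \<le> f u\<close> by (simp add: x1_ge_two floor_diff_one x1_top_pos)
  qed
  ultimately show ?thesis
    using other_leaf_outside[OF assms] nontrivial_tree_prune[OF assms]
    unfolding support_column_def by (auto simp: x1_nonpos x1_ge_two)
qed

lemma column_ab_x1: "support_column (x1 \<circ> f) (prune_forest a b B) (x1_top T) a b"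
  and column_a_mid: "support_column f B T a mid" and column_mid_b: "support_column f B T mid b"
  using fa fb mid_bounds(4) caret_ab forest_carets_iff[of a b B] unfolding support_column_def
  by (auto simp: x1_def)

text \<open>The columns of the new diagram are those of the old one, with the columns (a, mid) and (mid, b)
  merged into (a, b); all three lie in the support.\<close>
lemma support_columns_x1:
  assumes "P a b \<longleftrightarrow> P a mid \<or> P mid b"
  shows "(\<exists>(u, v)\<in>forest_leaves (prune_forest a b B). support_column (x1 \<circ> f) (prune_forest a b B) (x1_top T) u v \<and> P u v)
    \<longleftrightarrow> (\<exists>(u, v)\<in>forest_leaves B. support_column f B T u v \<and> P u v)"
    (is "?new \<longleftrightarrow> ?old")
proof
  assume ?new
  then obtain u v where uv: "(u, v) \<in> forest_leaves B - {(a, mid), (mid, b)} \<union> {(a, b)}"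
    "support_column (x1 \<circ> f) (prune_forest a b B) (x1_top T) u v" "P u v"
    unfolding forest_leaves_prune[OF elem] by blast
  then consider "(u, v) = (a, b)" | "(u, v) \<in> forest_leaves B" "(u, v) \<noteq> (a, mid)" "(u, v) \<noteq> (mid, b)"
    by blast
  then show ?old
  proof cases
    case 1
    then show ?thesis using uv(3) assms leaf_a_mid leaf_mid_b column_a_mid column_mid_b by blast
  next
    case 2
    then show ?thesis using uv(2,3) column_x1 by blast
  qed
next
  assume ?old
  then obtain u v where uv: "(u, v) \<in> forest_leaves B" "support_column f B T u v" "P u v" by blast
  have ab_new: "(a, b) \<in> forest_leaves (prune_forest a b B)" using forest_leaves_prune[OF elem] by blast
  show ?new
  proof (cases "(u, v) = (a, mid) \<or> (u, v) = (mid, b)")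
    case True
    then show ?thesis using uv(3) assms ab_new column_ab_x1 by blast
  next
    case False
    then have "(u, v) \<in> forest_leaves (prune_forest a b B)"
      using uv(1) forest_leaves_prune[OF elem] by blast
    then show ?thesis using uv column_x1 False by blast
  qed
qed

lemma support_spaces_x1:
  "support_spaces (x1 \<circ> f) (prune_forest a b B) (x1_top T) = support_spaces f B T - {mid}"
proof -
  have "p \<in> support_spaces (x1 \<circ> f) (prune_forest a b B) (x1_top T) \<longleftrightarrow> p \<in> support_spaces f B T - {mid}"
    for p
  proof (cases "p \<in> forest_points B \<and> p \<noteq> mid")
    case True
    then have outside: "p \<le> a \<or> b \<le> p" using point_outside_caret by blast
    have "(\<exists>(u, v)\<in>forest_leaves (prune_forest a b B). support_column (x1 \<circ> f) (prune_forest a b B) (x1_top T) u v \<and> v \<le> p)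
      \<longleftrightarrow> (\<exists>(u, v)\<in>forest_leaves B. support_column f B T u v \<and> v \<le> p)"
      by (rule support_columns_x1) (use outside mid_bounds in auto)
    moreover have "(\<exists>(u, v)\<in>forest_leaves (prune_forest a b B). support_column (x1 \<circ> f) (prune_forest a b B) (x1_top T) u v \<and> p \<le> u)
      \<longleftrightarrow> (\<exists>(u, v)\<in>forest_leaves B. support_column f B T u v \<and> p \<le> u)"
      by (rule support_columns_x1) (use outside mid_bounds in auto)
    ultimately show ?thesis using True unfolding support_spaces_def points_x1 by blast
  next
    case False
    then show ?thesis unfolding support_spaces_def points_x1 by blast
  qed
  then show ?thesis by blast
qed

lemma image_point_x1: "p \<in> forest_points (prune_forest a b B) \<Longrightarrow> f p \<le> 0 \<or> 2 \<le> f p"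
proof -
  assume "p \<in> forest_points (prune_forest a b B)"
  then obtain q where "(p, q) \<in> forest_leaves B - {(a, mid), (mid, b)} \<union> {(a, b)}"
    using forest_leaves_prune[OF elem] unfolding forest_points_def by auto
  then consider "p = a" | "(p, q) \<in> forest_leaves B" "(p, q) \<noteq> (a, mid)" "(p, q) \<noteq> (mid, b)" by auto
  then show ?thesis
  proof cases
    case 2
    then have "f p < f q" using forest_leaves_bounds mono by (simp add: strict_mono_less)
    then show ?thesis using other_leaf_outside[OF 2] by auto
  qed (simp add: fa)
qed

lemma top_label_x1:
  assumes "f p \<le> 0 \<or> 2 \<le> f p"
  shows "space_label (x1_top T) (x1 (f p)) = space_label T (f p)"
proof (rule space_label_eqI)
  have "x1 (f p) = f p \<or> x1 (f p) = f p - 1" using assms by (auto simp: x1_nonpos x1_ge_two)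
  then show "x1 (f p) \<in> \<int> \<longleftrightarrow> f p \<in> \<int>" by (metis Ints_1 Ints_add Ints_diff diff_add_cancel)
  show "x1 (f p) \<le> 0 \<longleftrightarrow> f p \<le> 0" using assms by (auto simp: x1_nonpos x1_ge_two)
  show "(\<exists>w. (x1 (f p), w) \<in> forest_carets (x1_top T)) \<longleftrightarrow> (\<exists>w. (f p, w) \<in> forest_carets T)"
    unfolding forest_carets_x1_top[OF T0 T1] using strict_mono_eq[OF strict_mono_x1] by auto
qed

lemma bottom_label_x1: "p \<noteq> a \<Longrightarrow> space_label (prune_forest a b B) p = space_label B p"
  by (rule space_label_eqI) (auto simp: forest_carets_prune[OF elem])

lemma weight_x1:
  assumes "p \<in> support_spaces (x1 \<circ> f) (prune_forest a b B) (x1_top T)"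
  shows "weight (space_label (x1_top T) ((x1 \<circ> f) p)) (space_label (prune_forest a b B) p)
    = weight (space_label T (f p)) (space_label B p)"
proof -
  have "p \<in> forest_points (prune_forest a b B)" using assms unfolding support_spaces_def by blast
  then have top: "space_label (x1_top T) ((x1 \<circ> f) p) = space_label T (f p)"
    using top_label_x1 image_point_x1 by simp
  show ?thesis
  proof (cases "p = a")
    case True
    then have LL: "space_label T (f p) = LL" using fa space_label_LL_iff by simp
    have "space_label (prune_forest a b B) p = LL \<longleftrightarrow> space_label B p = LL"
      using space_label_LL_iff by simp
    then show ?thesis by (simp only: top LL weight_LL)
  next
    case False
    then show ?thesis using top bottom_label_x1 by simp
  qed
qed

text \<open>The space between the two leaves of the cancelled caret has labels (R, I), hence weight 0.\<close>
lemma weight_mid: "weight (space_label T (f mid)) (space_label B mid) = 0"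
proof -
  have "\<not> (\<exists>w. (1, w) \<in> forest_carets T)" using T1 forest_carets_iff[of 1 _ T] by simp
  then have "space_label T (f mid) = RR" unfolding space_label_def f_mid by simp
  moreover have "mid \<notin> \<int>"
  proof
    assume "mid \<in> \<int>"
    then have "mid = real_of_int \<lfloor>a\<rfloor>" using mid_bounds(4) by (metis Ints_cases floor_of_int)
    then show False using mid_bounds(2) of_int_floor_le[of a] by linarith
  qed
  moreover have "\<not> (\<exists>w. (mid, w) \<in> forest_carets B)"
  proof
    assume "\<exists>w. (mid, w) \<in> forest_carets B"
    then obtain w where c: "(mid, w) \<in> forest_carets B" by blast
    have "w \<noteq> b" using c leaf_mid_b forest_caret_not_leaf by blast
    moreover have "(mid, w) \<in> forest_nodes B" using c forest_carets_subset_nodes by blast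
    then have "\<not> w < b" using forest_leaf_minimal[OF leaf_mid_b, of mid w] by auto
    moreover have "\<not> b < w"
      using forest_nodes_laminar[of a b B mid w] c caret_ab forest_carets_subset_nodes forest_carets_bounds mid_bounds
      by force
    ultimately show False by linarith
  qed
  ultimately have "space_label B mid = II" unfolding space_label_def by simp
  with \<open>space_label T (f mid) = RR\<close> show ?thesis by simp
qed

lemma ell0_x1: "ell0_diag (x1 \<circ> f) (prune_forest a b B) (x1_top T) = ell0_diag f B T"
proof -
  let ?w = "\<lambda>p. weight (space_label T (f p)) (space_label B p)"
  have "ell0_diag (x1 \<circ> f) (prune_forest a b B) (x1_top T) = sum ?w (support_spaces f B T - {mid})"
    unfolding ell0_diag_def support_spaces_x1[symmetric] using weight_x1 by (intro sum.cong) auto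
  also have "\<dots> = sum ?w (support_spaces f B T)" using sum_diff1_nat[of ?w] weight_mid by simp
  finally show ?thesis unfolding ell0_diag_def .
qed

theorem ell_x1: "ell (x1 \<circ> f) + 1 = ell f"
proof -
  have "strict_mono (x1 \<circ> f)" using mono strict_mono_x1 unfolding strict_mono_def by simp
  moreover have "surj (x1 \<circ> f)" using comp_surj[OF onto surj_x1] .
  ultimately have "ell (x1 \<circ> f) = ell0_diag f B T + ell1_diag (prune_forest a b B) (x1_top T)"
    using ell_eq_reduced_diagram[OF reduced_x1] ell0_x1 by simp
  then show ?thesis using ell_eq_reduced_diagram[OF reduced mono onto] ell1_x1 by simp
qed

end

theorem proposition4p3p5:
  fixes f :: "real \<Rightarrow> real" and B T :: forest
  assumes "in_F f"
    and "reduced_forest_diagram f B T"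
    and "T 0 = Leaf" and "T 1 = Leaf"
    and "\<exists>a b. (a, b) \<in> forest_elem_carets B \<and> f a = 0 \<and> f b = 2"
  shows "ell (x1 \<circ> f) + 1 = ell f"
proof -
  obtain a b where caret: "(a, b) \<in> forest_elem_carets B" "f a = 0" "f b = 2" using assms(5) by blast
  have "strict_mono f" "surj f" using in_F_strict_mono_surj[OF assms(1)] by auto
  then interpret x1_cancels_bottom_caret f B T a b
    using assms(2-4) caret by unfold_locales
  show ?thesis by (rule ell_x1)
qed

end
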